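(* The category $\mathrm{SubNeck}(\square^n)$ is a poset. It is in bijection (as a poset) with the poset of ordered partitions of $\{1,\dots,n\}$ ordered by the inverse refinement order $\le_r$, the reflexive-transitive closure of $(A_1;\dots;A_k)\le_r(A_1;\dots;A_i\cup A_{i+1};\dots;A_k)$. In particular it has a greatest element, the one-block partition $(\{1,\dots,n\})$, its set of minimal elements is naturally in bijection with the symmetric group $\Sigma_n$, and it admits all least upper bounds.
   Context: Cubical sets: presheaves on the category $\square$ with objects $[1]^n$ and morphisms generated by faces $\partial_{i,\epsilon}$ (insert $\epsilon$ at coordinate $i$), degeneracies (delete a coordinate) and negative connections ($\gamma_{i,0}$ replaces $(x_i,x_{i+1})$ by $\max(x_i,x_{i+1})$); $\square^n$ is representable, with vertices the subsets of $\{1,\dots,n\}$, $\alpha=\emptyset$, $\omega=\{1,\dots,n\}$. Necklaces: for cubical sets with two chosen vertices $X_{a,b},Y_{u,v}$, $X\vee Y$ is the pushout identifying $b$ with $u$, pointed by $(a,v)$. A necklace is $\square^{n_1}\vee\dots\vee\square^{n_k}$ ($n_i\ge1$) pointed by the $\alpha$ of the first and the $\omega$ of the last cube. $\mathcal{N}ec$ is the full subcategory of double-pointed cubical sets (morphisms preserving both points) on necklaces. $\mathrm{SubNeck}(\square^n)$ denotes the category whose objects are monomorphisms $T\to\square^n$ with $T$ a necklace sending its endpoints to $\alpha,\omega$, and whose morphisms from $f:T\to\square^n$ to $f':T'\to\square^n$ are monomorphisms $g:T\to T'$ in $\mathcal{N}ec$ with $f'g=f$. An ordered partition of $\{1,\dots,n\}$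 is a sequence $(A_1;\dots;A_k)$ of nonempty pairwise disjoint subsets with union $\{1,\dots,n\}$. *)

theory Defs
  imports Main "HOL-Combinatorics.Permutations"
begin

text \<open>A vertex of [1]^n is a bool list of length n (False = 0, True = 1).
  A morphism [1]^m -> [1]^n of the cube category is represented by an
  extensional function on bool lists: it returns [] on lists of length
  different from m.\<close>

type_synonym cmap = "bool list \<Rightarrow> bool list"

definition cid :: "nat \<Rightarrow> cmap" where
  "cid n = (\<lambda>xs. if length xs = n then xs else [])"

definition ccomp :: "nat \<Rightarrow> cmap \<Rightarrow> cmap \<Rightarrow> cmap" where
  "ccomp l g f = (\<lambda>xs. if length xs = l then g (f xs) else [])"

definition cface :: "nat \<Rightarrow> nat \<Rightarrow> bool \<Rightarrow> cmap" where
  "cface n i e = (\<lambda>xs. if length xs = n then take i xs @ [e] @ drop i xs else [])"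

definition cdegen :: "nat \<Rightarrow> nat \<Rightarrow> cmap" where
  "cdegen n i = (\<lambda>xs. if length xs = Suc n then take i xs @ drop (Suc i) xs else [])"

text \<open>negative connection: [1]^(n+2) -> [1]^(n+1), replace (x_i, x_(i+1)) by
  max(x_i, x_(i+1)) (0-based i \<le> n)\<close>
definition cconn :: "nat \<Rightarrow> nat \<Rightarrow> cmap" where
  "cconn n i = (\<lambda>xs. if length xs = Suc (Suc n)
      then take i xs @ [xs ! i \<or> xs ! Suc i] @ drop (Suc (Suc i)) xs else [])"

inductive cube_hom :: "nat \<Rightarrow> nat \<Rightarrow> cmap \<Rightarrow> bool" where
  hid: "cube_hom n n (cid n)"
| hface: "i \<le> n \<Longrightarrow> cube_hom n (Suc n) (cface n i e)"
| hdegen: "i \<le> n \<Longrightarrow> cube_hom (Suc n) n (cdegen n i)"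
| hconn: "i \<le> n \<Longrightarrow> cube_hom (Suc (Suc n)) (Suc n) (cconn n i)"
| hcomp: "cube_hom l m f \<Longrightarrow> cube_hom m n g \<Longrightarrow> cube_hom l n (ccomp l g f)"

definition const_map :: "nat \<Rightarrow> bool list \<Rightarrow> cmap" where
  "const_map m v = (\<lambda>xs. if length xs = m then v else [])"

text \<open>cells X m = set of m-cubes; act X m n f x = X(f)(x) for f : [1]^m -> [1]^n
  and x an n-cube.\<close>
record 'a cset =
  cells :: "nat \<Rightarrow> 'a set"
  act :: "nat \<Rightarrow> nat \<Rightarrow> cmap \<Rightarrow> 'a \<Rightarrow> 'a"

definition cset_hom :: "'a cset \<Rightarrow> 'b cset \<Rightarrow> (nat \<Rightarrow> 'a \<Rightarrow> 'b) \<Rightarrow> bool" where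
  "cset_hom X Y \<phi> \<longleftrightarrow>
     (\<forall>m x. x \<in> cells X m \<longrightarrow> \<phi> m x \<in> cells Y m)
   \<and> (\<forall>m n f x. cube_hom m n f \<and> x \<in> cells X n \<longrightarrow>
          \<phi> m (act X m n f x) = act Y m n f (\<phi> n x))
   \<and> (\<forall>m x. x \<notin> cells X m \<longrightarrow> \<phi> m x = undefined)"

definition cset_mono :: "'a cset \<Rightarrow> (nat \<Rightarrow> 'a \<Rightarrow> 'b) \<Rightarrow> bool" where
  "cset_mono X \<phi> \<longleftrightarrow> (\<forall>m. inj_on (\<phi> m) (cells X m))"

text \<open>The representable cubical set \<box>^n (Yoneda).\<close>
definition cube :: "nat \<Rightarrow> cmap cset" where
  "cube n = \<lparr> cells = (\<lambda>m. {f. cube_hom m n f}),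
              act = (\<lambda>m k h f. ccomp m f h) \<rparr>"

definition alpha :: "nat \<Rightarrow> cmap" where
  "alpha n = const_map 0 (replicate n False)"

definition omega :: "nat \<Rightarrow> cmap" where
  "omega n = const_map 0 (replicate n True)"

text \<open>The necklace \<box>^(ns!0) \<or> ... \<or> \<box>^(ns!(k-1)), built as the iterated pushout
  identifying the omega-vertex of bead i with the alpha-vertex of bead i+1.
  An m-cube is a pair (i, g) with g an m-cube of \<box>^(ns!i); the degenerate
  cubes at the alpha-vertex of bead i > 0 are represented by the corresponding
  cubes at the omega-vertex of bead i-1 (canonical representatives of the
  pushout).\<close>

definition is_neck :: "nat list \<Rightarrow> bool" where
  "is_neck ns \<longleftrightarrow> ns \<noteq> [] \<and> (\<forall>d\<in>set ns. 1 \<le> d)"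

definition nnorm :: "nat list \<Rightarrow> nat \<Rightarrow> nat \<times> cmap \<Rightarrow> nat \<times> cmap" where
  "nnorm ns m p = (case p of (i, g) \<Rightarrow>
     if 0 < i \<and> g = const_map m (replicate (ns ! i) False)
     then (i - 1, const_map m (replicate (ns ! (i - 1)) True)) else (i, g))"

definition necklace :: "nat list \<Rightarrow> (nat \<times> cmap) cset" where
  "necklace ns = \<lparr> cells = (\<lambda>m. {(i, g). i < length ns \<and> cube_hom m (ns ! i) g
                       \<and> \<not> (0 < i \<and> g = const_map m (replicate (ns ! i) False))}),
                   act = (\<lambda>m n h p. nnorm ns m (fst p, ccomp m (snd p) h)) \<rparr>"

definition nstart :: "nat list \<Rightarrow> nat \<times> cmap" where
  "nstart ns = (0, const_map 0 (replicate (ns ! 0) False))"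

definition nend :: "nat list \<Rightarrow> nat \<times> cmap" where
  "nend ns = (length ns - 1, const_map 0 (replicate (last ns) True))"

type_synonym subneck = "nat list \<times> (nat \<Rightarrow> nat \<times> cmap \<Rightarrow> cmap)"

definition subneck_obj :: "nat \<Rightarrow> subneck set" where
  "subneck_obj n = {(ns, \<phi>). is_neck ns \<and> cset_hom (necklace ns) (cube n) \<phi>
       \<and> cset_mono (necklace ns) \<phi>
       \<and> \<phi> 0 (nstart ns) = alpha n \<and> \<phi> 0 (nend ns) = omega n}"

definition subneck_hom :: "nat \<Rightarrow> subneck \<Rightarrow> subneck \<Rightarrow> (nat \<Rightarrow> nat \<times> cmap \<Rightarrow> nat \<times> cmap) \<Rightarrow> bool" where
  "subneck_hom n x y g \<longleftrightarrow> (case x of (ns, \<phi>) \<Rightarrow> case y of (ns', \<phi>') \<Rightarrow>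
       cset_hom (necklace ns) (necklace ns') g \<and> cset_mono (necklace ns) g
     \<and> g 0 (nstart ns) = nstart ns' \<and> g 0 (nend ns) = nend ns'
     \<and> (\<forall>m z. z \<in> cells (necklace ns) m \<longrightarrow> \<phi>' m (g m z) = \<phi> m z))"

definition subneck_le :: "nat \<Rightarrow> subneck \<Rightarrow> subneck \<Rightarrow> bool" where
  "subneck_le n x y \<longleftrightarrow> (\<exists>g. subneck_hom n x y g)"

definition ordered_partitions :: "nat \<Rightarrow> nat set list set" where
  "ordered_partitions n = {P. (\<forall>A\<in>set P. A \<noteq> {})
      \<and> (\<forall>i<length P. \<forall>j<length P. i \<noteq> j \<longrightarrow> P ! i \<inter> P ! j = {})
      \<and> \<Union>(set P) = {1..n}}"

definition merge_step :: "nat set list \<Rightarrow> nat set list \<Rightarrow> bool" where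
  "merge_step P Q \<longleftrightarrow> (\<exists>i. Suc i < length P \<and>
      Q = take i P @ [P ! i \<union> P ! Suc i] @ drop (Suc (Suc i)) P)"

definition refine_le :: "nat set list \<Rightarrow> nat set list \<Rightarrow> bool" where
  "refine_le = merge_step\<^sup>*\<^sup>*"

end

theory Submission
  imports Defs
begin

text \<open>
  Every map of the cube category is coordinatewise a constant joined with the inputs that a
  monotone partial assignment sends to that coordinate. Hence an injective map
  \<open>[1]^k \<rightarrow> [1]^n\<close> is determined by the images of \<open>\<alpha>\<close> and \<open>\<omega>\<close>, and the coordinates in which
  these differ, its directions, form a \<open>k\<close>-set. The directions of the beads of a
  sub-necklace \<open>T \<hookrightarrow> \<box>^n\<close> therefore form an ordered partition of \<open>{1..n}\<close> which determines
  \<open>T\<close>, and conversely every ordered partition is realised by a necklace of faces of \<open>\<box>^n\<close>.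

  A morphism over \<open>\<box>^n\<close> must be \<open>\<psi>\<^sup>-\<^sup>1 \<circ> \<phi>\<close>, so SubNeck is thin, and it exists iff the image
  of the first necklace lies in that of the second, i.e. iff every bead face of the first
  partition lies in a bead face of the second. Recording an ordered partition by its chain
  of cuts (prefix unions), this is reverse inclusion of cuts, and so is inverse refinement,
  since merging two adjacent blocks deletes one cut. Least upper bounds are obtained by
  intersecting sets of cuts; the one-block partition is the top, and the minimal elements are
  the partitions into singletons, i.e. the permutations.
\<close>

section \<open>Maps of the cube category\<close>

lemma cube_hom_length: "cube_hom m n f \<Longrightarrow> length xs = m \<Longrightarrow> length (f xs) = n"
  by (induction arbitrary: xs rule: cube_hom.induct)
    (auto simp: cid_def cface_def cdegen_def cconn_def ccomp_def)

lemma cube_hom_outside: "cube_hom m n f \<Longrightarrow> length xs \<noteq> m \<Longrightarrow> f xs = []"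
  by (induction arbitrary: xs rule: cube_hom.induct)
    (auto simp: cid_def cface_def cdegen_def cconn_def ccomp_def)

lemma cube_hom_eqI:
  assumes "cube_hom m n f" "cube_hom m n g" "\<And>xs. length xs = m \<Longrightarrow> f xs = g xs"
  shows "f = g"
proof
  fix xs show "f xs = g xs"
    using assms cube_hom_outside[OF assms(1)] cube_hom_outside[OF assms(2)]
    by (cases "length xs = m") auto
qed

lemma ccomp_cid_left: "cube_hom m k g \<Longrightarrow> ccomp m (cid k) g = g"
  using cube_hom_length[of m k g] cube_hom_outside[of m k g] by (auto simp: ccomp_def cid_def)

lemma ccomp_cid_right: "cube_hom k n f \<Longrightarrow> ccomp k f (cid k) = f"
  using cube_hom_outside[of k n f] by (auto simp: ccomp_def cid_def)

lemma ccomp_assoc: "cube_hom m k h \<Longrightarrow> ccomp m (ccomp k f g) h = ccomp m f (ccomp m g h)"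
  using cube_hom_length[of m k h] by (auto simp: ccomp_def)

lemma ccomp_const_map: "ccomp m f (const_map m v) = const_map m (f v)"
  by (auto simp: ccomp_def const_map_def)

lemma const_map_inject: "const_map m v = const_map m w \<longleftrightarrow> v = w"
  by (metis const_map_def length_replicate)

lemma cube_hom_eq_const_map:
  "cube_hom m k g \<Longrightarrow> (\<And>xs. length xs = m \<Longrightarrow> g xs = v) \<Longrightarrow> g = const_map m v"
  using cube_hom_outside[of m k g] by (auto simp: const_map_def)

lemma replicate_True_neq_False: "0 < k \<Longrightarrow> replicate k True \<noteq> replicate k False"
  by (cases k) auto

lemma cid_neq_const_map: "0 < k \<Longrightarrow> cid k \<noteq> const_map k (replicate k False)"
  by (metis cid_def const_map_def length_replicate replicate_True_neq_False)

definition cube_extend :: "nat \<Rightarrow> cmap \<Rightarrow> cmap" where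
  "cube_extend m f = (\<lambda>xs. case xs of [] \<Rightarrow> [] | x # xs' \<Rightarrow> if length xs' = m then x # f xs' else [])"

lemma cube_hom_cube_extend: "cube_hom m n f \<Longrightarrow> cube_hom (Suc m) (Suc n) (cube_extend m f)"
proof (induction rule: cube_hom.induct)
  case (hid n)
  have "cube_extend n (cid n) = cid (Suc n)"
    by (auto simp: fun_eq_iff cube_extend_def cid_def split: list.split)
  then show ?case using cube_hom.hid by metis
next
  case (hface i n e)
  have "cube_extend n (cface n i e) = cface (Suc n) (Suc i) e"
    by (auto simp: fun_eq_iff cube_extend_def cface_def split: list.split)
  then show ?case using cube_hom.hface[of "Suc i" "Suc n" e] hface by simp
next
  case (hdegen i n)
  have "cube_extend (Suc n) (cdegen n i) = cdegen (Suc n) (Suc i)"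
    by (auto simp: fun_eq_iff cube_extend_def cdegen_def split: list.split)
  then show ?case using cube_hom.hdegen[of "Suc i" "Suc n"] hdegen by simp
next
  case (hconn i n)
  have "cube_extend (Suc (Suc n)) (cconn n i) = cconn (Suc n) (Suc i)"
    by (auto simp: fun_eq_iff cube_extend_def cconn_def split: list.split)
  then show ?case using cube_hom.hconn[of "Suc i" "Suc n"] hconn by simp
next
  case (hcomp l m f n g)
  have "cube_extend l (ccomp l g f) = ccomp (Suc l) (cube_extend m g) (cube_extend l f)"
    using cube_hom_length[OF hcomp.hyps(1)]
    by (auto simp: fun_eq_iff cube_extend_def ccomp_def split: list.split)
  then show ?case using cube_hom.hcomp[OF hcomp.IH] by simp
qed

text \<open>A mask \<open>M\<close> selects the free coordinates of a face of \<open>[1]^(length M)\<close>; the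
  remaining coordinates are read off a base vertex \<open>u\<close>.\<close>

definition count_true :: "bool list \<Rightarrow> nat" where
  "count_true M = length (filter id M)"

fun mask_fill :: "bool list \<Rightarrow> bool list \<Rightarrow> bool list \<Rightarrow> bool list" where
  "mask_fill [] u xs = []"
| "mask_fill (b # M) u xs =
    (if b then hd xs # mask_fill M (tl u) (tl xs) else hd u # mask_fill M (tl u) xs)"

fun mask_select :: "bool list \<Rightarrow> bool list \<Rightarrow> bool list" where
  "mask_select [] w = []"
| "mask_select (b # M) w = (if b then hd w # mask_select M (tl w) else mask_select M (tl w))"

definition face_map :: "bool list \<Rightarrow> bool list \<Rightarrow> cmap" where
  "face_map M u = (\<lambda>xs. if length xs = count_true M then mask_fill M u xs else [])"

definition face_proj :: "bool list \<Rightarrow> cmap" where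
  "face_proj M = (\<lambda>w. if length w = length M then mask_select M w else [])"

lemma length_mask_fill [simp]: "length (mask_fill M u xs) = length M"
  by (induction M arbitrary: u xs) auto

lemma length_mask_select: "length (mask_select M w) = count_true M"
  by (induction M arbitrary: w) (auto simp: count_true_def)

lemma cube_hom_face_map: "length u = length M \<Longrightarrow> cube_hom (count_true M) (length M) (face_map M u)"
proof (induction M arbitrary: u)
  case Nil
  have "face_map [] u = cid 0" by (auto simp: face_map_def cid_def count_true_def)
  then show ?case using cube_hom.hid[of 0] by (simp add: count_true_def)
next
  case (Cons b M)
  have IH: "cube_hom (count_true M) (length M) (face_map M (tl u))" using Cons by simp
  show ?case
  proof (cases b)
    case True
    have "face_map (b # M) u = cube_extend (count_true M) (face_map M (tl u))"
      using True
      by (auto simp: fun_eq_iff face_map_def cube_extend_def count_true_def split: list.split)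
    then show ?thesis using cube_hom_cube_extend[OF IH] True by (simp add: count_true_def)
  next
    case False
    have "face_map (b # M) u = ccomp (count_true M) (cface (length M) 0 (hd u)) (face_map M (tl u))"
      using False by (auto simp: face_map_def ccomp_def cface_def count_true_def)
    then show ?thesis using cube_hom.hcomp[OF IH cube_hom.hface[of 0 "length M" "hd u"]] False
      by (simp add: count_true_def)
  qed
qed

lemma cube_hom_face_proj: "cube_hom (length M) (count_true M) (face_proj M)"
proof (induction M)
  case Nil
  have "face_proj [] = cid 0" by (auto simp: face_proj_def cid_def)
  then show ?case using cube_hom.hid[of 0] by (simp add: count_true_def)
next
  case (Cons b M)
  show ?case
  proof (cases b)
    case True
    have "face_proj (b # M) = cube_extend (length M) (face_proj M)"
      using True by (auto simp: fun_eq_iff face_proj_def cube_extend_def split: list.split)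
    then show ?thesis using cube_hom_cube_extend[OF Cons] True by (simp add: count_true_def)
  next
    case False
    have "face_proj (b # M) = ccomp (Suc (length M)) (face_proj M) (cdegen (length M) 0)"
      using False by (auto simp: face_proj_def ccomp_def cdegen_def drop_Suc)
    then show ?thesis using cube_hom.hcomp[OF cube_hom.hdegen[of 0 "length M"] Cons] False
      by (simp add: count_true_def)
  qed
qed

lemma mask_select_mask_fill: "length xs = count_true M \<Longrightarrow> mask_select M (mask_fill M u xs) = xs"
  by (induction M arbitrary: u xs) (auto simp: count_true_def neq_Nil_conv length_Suc_conv)

lemma mask_fill_mask_select:
  "length w = length M \<Longrightarrow> length u = length M \<Longrightarrow> (\<forall>j<length M. \<not> M ! j \<longrightarrow> w ! j = u ! j)
    \<Longrightarrow> mask_fill M u (mask_select M w) = w"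
proof (induction M arbitrary: u w)
  case (Cons b M)
  obtain a w' where w: "w = a # w'" using Cons.prems(1) by (cases w) auto
  obtain c u' where u: "u = c # u'" using Cons.prems(2) by (cases u) auto
  have "\<forall>j<length M. \<not> M ! j \<longrightarrow> w' ! j = u' ! j"
    using Cons.prems(3) w u by fastforce
  then have "mask_fill M u' (mask_select M w') = w'"
    using Cons.IH[of w' u'] Cons.prems w u by simp
  moreover have "\<not> b \<Longrightarrow> a = c" using Cons.prems(3) w u by force
  ultimately show ?case using w u by (cases b) simp_all
qed simp

lemma nth_mask_fill:
  "j < length M \<Longrightarrow> length u = length M \<Longrightarrow> length xs = count_true M \<Longrightarrow>
   mask_fill M u xs ! j = (if M ! j then xs ! count_true (take j M) else u ! j)"
proof (induction M arbitrary: u xs j)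
  case (Cons b M)
  obtain c u' where u: "u = c # u'" using Cons.prems(2) by (cases u) auto
  show ?case
  proof (cases b)
    case True
    then obtain a xs' where xs: "xs = a # xs'"
      using Cons.prems(3) by (cases xs) (auto simp: count_true_def)
    show ?thesis
      using Cons.IH[of "j - 1" u' xs'] Cons.prems True xs u
      by (cases j) (simp_all add: count_true_def)
  next
    case False
    show ?thesis
      using Cons.IH[of "j - 1" u' xs] Cons.prems False u by (cases j) (simp_all add: count_true_def)
  qed
qed simp

lemma cube_hom_const_map: "length v = k \<Longrightarrow> cube_hom m k (const_map m v)"
proof -
  assume v: "length v = k"
  have empty: "count_true (replicate l False) = 0" for l
    by (simp add: count_true_def)
  have "mask_fill M u xs = u" if "length u = length M" "\<forall>b\<in>set M. \<not> b" for M u xs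
    using that by (induction M arbitrary: u xs) (auto simp: length_Suc_conv)
  then have "mask_fill (replicate k False) v xs = v" for xs
    using v by simp
  then have "face_map (replicate k False) v = const_map 0 v"
    by (auto simp: face_map_def const_map_def empty)
  then have point: "cube_hom 0 k (const_map 0 v)"
    using cube_hom_face_map[of v "replicate k False"] v by (simp add: empty)
  have "ccomp m (const_map 0 v) (face_proj (replicate m False)) = const_map m v"
    using length_mask_select[of "replicate m False"]
    by (auto simp: ccomp_def const_map_def face_proj_def empty)
  then show ?thesis
    using cube_hom.hcomp[OF _ point, of m "face_proj (replicate m False)"]
      cube_hom_face_proj[of "replicate m False"] by (simp add: empty)
qed

section \<open>Normal form of cube maps\<close>

definition join_map :: "nat \<Rightarrow> nat \<Rightarrow> cmap \<Rightarrow> bool" where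
  "join_map k n f \<longleftrightarrow> (\<exists>c d. length c = n
    \<and> (\<forall>xs::bool list. length xs = k \<longrightarrow> f xs = map (\<lambda>j. c!j \<or> (\<exists>r<k. xs!r \<and> d r = Some j)) [0..<n])
    \<and> (\<forall>r s j j'. r < s \<and> s < k \<and> d r = Some j \<and> d s = Some j' \<longrightarrow> j \<le> j'))"

lemma join_mapI:
  assumes "length c = n"
    and "\<And>xs::bool list. length xs = k \<Longrightarrow> length (f xs) = n"
    and "\<And>(xs::bool list) j. length xs = k \<Longrightarrow> j < n \<Longrightarrow> f xs ! j = (c!j \<or> (\<exists>r<k. xs!r \<and> d r = Some j))"
    and "\<And>r s j j'. r < s \<Longrightarrow> s < k \<Longrightarrow> d r = Some j \<Longrightarrow> d s = Some j' \<Longrightarrow> j \<le> j'"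
  shows "join_map k n f"
  unfolding join_map_def
proof (intro exI conjI allI impI)
  fix xs :: "bool list" assume "length xs = k"
  then show "f xs = map (\<lambda>j. c!j \<or> (\<exists>r<k. xs!r \<and> d r = Some j)) [0..<n]"
    using assms(2,3) by (intro nth_equalityI) auto
qed (use assms(1,4) in blast)+

lemma join_map_cid: "join_map n n (cid n)"
  by (rule join_mapI[where c="replicate n False" and d=Some]) (auto simp: cid_def)

lemma join_map_cface:
  assumes "i \<le> n"
  shows "join_map n (Suc n) (cface n i e)"
proof (rule join_mapI[where c="map (\<lambda>j. j = i \<and> e) [0..<Suc n]"
      and d="\<lambda>r. Some (if r < i then r else Suc r)"])
  fix xs :: "bool list" and j assume xs: "length xs = n" and j: "j < Suc n"
  have "cface n i e xs ! j = (if j < i then xs ! j else if j = i then e else xs ! (j - 1))"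
    using assms xs j by (auto simp: cface_def nth_append min_def)
  moreover have "(if r < i then r else Suc r) = j \<longleftrightarrow> (if j < i then r = j else j \<noteq> i \<and> r = j - 1)"
    for r
    by auto
  ultimately show "cface n i e xs ! j = (map (\<lambda>j. j = i \<and> e) [0..<Suc n] ! j \<or>
      (\<exists>r<n. xs ! r \<and> Some (if r < i then r else Suc r) = Some j))"
    using assms xs j by (auto simp del: upt_Suc)
qed (use assms in \<open>auto simp: cface_def\<close>)

lemma join_map_cdegen:
  assumes "i \<le> n"
  shows "join_map (Suc n) n (cdegen n i)"
proof (rule join_mapI[where c="replicate n False"
      and d="\<lambda>r. if r < i then Some r else if r = i then None else Some (r - 1)"])
  fix xs :: "bool list" and j assume xs: "length xs = Suc n" and j: "j < n"
  have "(if r < i then Some r else if r = i then None else Some (r - 1)) = Some j \<longleftrightarrow>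
      (if j < i then r = j else r = Suc j)" for r
    by auto
  then show "cdegen n i xs ! j = (replicate n False ! j \<or>
      (\<exists>r<Suc n. xs ! r \<and>
        (if r < i then Some r else if r = i then None else Some (r - 1)) = Some j))"
    using assms xs j by (auto simp: cdegen_def nth_append min_def)
qed (use assms in \<open>auto simp: cdegen_def split: if_splits\<close>)

lemma join_map_cconn:
  assumes "i \<le> n"
  shows "join_map (Suc (Suc n)) (Suc n) (cconn n i)"
proof (rule join_mapI[where c="replicate (Suc n) False"
      and d="\<lambda>r. Some (if r \<le> i then r else r - 1)"])
  fix xs :: "bool list" and j assume xs: "length xs = Suc (Suc n)" and j: "j < Suc n"
  have "(if r \<le> i then r else r - 1) = j \<longleftrightarrow>
      (if j < i then r = j else if j = i then r = i \<or> r = Suc i else r = Suc j)" for r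
    by auto
  then have "(\<exists>r<Suc (Suc n). xs ! r \<and> (if r \<le> i then r else r - 1) = j) \<longleftrightarrow>
      (if j < i then xs ! j else if j = i then xs ! i \<or> xs ! Suc i else xs ! Suc j)"
    using assms j by (cases "j < i"; cases "j = i") (auto simp: conj_disj_distribL ex_disj_distrib)
  then show "cconn n i xs ! j = (replicate (Suc n) False ! j \<or>
      (\<exists>r<Suc (Suc n). xs ! r \<and> Some (if r \<le> i then r else r - 1) = Some j))"
    using assms xs j by (auto simp: cconn_def nth_append min_def simp del: replicate_Suc)
qed (use assms in \<open>auto simp: cconn_def split: if_splits\<close>)

lemma join_map_ccomp:
  assumes f: "join_map l m f" and g: "join_map m n g"
    and f_length: "\<And>xs::bool list. length xs = l \<Longrightarrow> length (f xs) = m"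
  shows "join_map l n (ccomp l g f)"
proof -
  obtain c1 d1 where c1: "length c1 = m"
    and f1: "\<And>xs::bool list. length xs = l \<Longrightarrow>
      f xs = map (\<lambda>j. c1!j \<or> (\<exists>r<l. xs!r \<and> d1 r = Some j)) [0..<m]"
    and d1: "\<And>r s j j'. r < s \<Longrightarrow> s < l \<Longrightarrow> d1 r = Some j \<Longrightarrow> d1 s = Some j' \<Longrightarrow> j \<le> j'"
    using f unfolding join_map_def by blast
  obtain c2 d2 where c2: "length c2 = n"
    and g2: "\<And>xs::bool list. length xs = m \<Longrightarrow>
      g xs = map (\<lambda>j. c2!j \<or> (\<exists>r<m. xs!r \<and> d2 r = Some j)) [0..<n]"
    and d2: "\<And>r s j j'. r < s \<Longrightarrow> s < m \<Longrightarrow> d2 r = Some j \<Longrightarrow> d2 s = Some j' \<Longrightarrow> j \<le> j'"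
    using g unfolding join_map_def by blast
  define c where "c = map (\<lambda>j. c2!j \<or> (\<exists>r<m. c1!r \<and> d2 r = Some j)) [0..<n]"
  define d where "d = (\<lambda>q. case d1 q of None \<Rightarrow> None | Some r \<Rightarrow> if r < m then d2 r else None)"
  show ?thesis
  proof (rule join_mapI[where c=c and d=d])
    fix xs :: "bool list" and j assume xs: "length xs = l" and j: "j < n"
    have "ccomp l g f xs ! j = (c2!j \<or> (\<exists>r<m. f xs!r \<and> d2 r = Some j))"
      using xs j f_length g2 by (simp add: ccomp_def)
    also have "\<dots> = (c2!j \<or> (\<exists>r<m. (c1!r \<or> (\<exists>q<l. xs!q \<and> d1 q = Some r)) \<and> d2 r = Some j))"
      using f1[OF xs] by (simp cong: conj_cong)
    also have "\<dots> = (c!j \<or> (\<exists>q<l. xs!q \<and> d q = Some j))"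
      using j by (auto simp: c_def d_def split: option.splits)
    finally show "ccomp l g f xs ! j = (c!j \<or> (\<exists>q<l. xs!q \<and> d q = Some j))" .
  next
    fix r s j j' assume rs: "r < s" "s < l" "d r = Some j" "d s = Some j'"
    then obtain a b where a: "d1 r = Some a" "a < m" "d2 a = Some j"
      and b: "d1 s = Some b" "b < m" "d2 b = Some j'"
      by (auto simp: d_def split: option.splits if_splits)
    have "a \<le> b" using d1[OF rs(1,2) a(1) b(1)] .
    then show "j \<le> j'" using d2[of a b j j'] a b by (cases "a = b") simp_all
  qed (use c2 f_length g2 in \<open>simp_all add: c_def ccomp_def\<close>)
qed

lemma cube_hom_join_map: "cube_hom m n f \<Longrightarrow> join_map m n f"
  by (induction rule: cube_hom.induct)
    (auto intro: join_map_cid join_map_cface join_map_cdegen join_map_cconn join_map_ccomp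
      dest: cube_hom_length)

lemma join_map_alpha_le_omega:
  assumes "join_map k n f" "j < n" "f (replicate k False) ! j"
  shows "f (replicate k True) ! j"
  using assms unfolding join_map_def by (auto cong: conj_cong)

definition cube_directions :: "nat \<Rightarrow> nat \<Rightarrow> cmap \<Rightarrow> nat set" where
  "cube_directions k n f = {j. j < n \<and> f (replicate k True) ! j \<and> \<not> f (replicate k False) ! j}"

definition unit_vertex :: "nat \<Rightarrow> nat \<Rightarrow> bool list" where
  "unit_vertex k r = (replicate k False)[r := True]"

text \<open>Injectivity on \<open>\<alpha>\<close> and on the unit vertices forces every input coordinate to be
  assigned, to distinct output coordinates.\<close>

lemma inj_join_map_assignment:
  assumes c: "length c = n"
    and f: "\<And>xs. length xs = k \<Longrightarrow> f xs = map (\<lambda>j. c!j \<or> (\<exists>r<k. xs!r \<and> d r = Some j)) [0..<n]"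
    and inj: "inj_on f {xs. length xs = k}"
  shows "\<forall>r<k. \<exists>j<n. d r = Some j \<and> \<not> c ! j" "\<forall>r<k. \<forall>s<k. d r = d s \<longrightarrow> r = s"
proof -
  have unit: "f (unit_vertex k r) = map (\<lambda>j. c!j \<or> d r = Some j) [0..<n]" if "r < k" for r
    using f[of "unit_vertex k r"] that by (auto simp: unit_vertex_def nth_list_update)
  have unit_nth: "unit_vertex k r ! s \<longleftrightarrow> r = s" if "r < k" "s < k" for r s
    using that by (auto simp: unit_vertex_def nth_list_update)
  have unit_length: "length (unit_vertex k r) = k" for r
    by (simp add: unit_vertex_def)
  have "f (replicate k False) = map ((!) c) [0..<n]"
    using f[of "replicate k False"] by (simp cong: conj_cong)
  then have alpha: "f (replicate k False) = c"
    using c map_nth by metis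
  show "\<forall>r<k. \<exists>j<n. d r = Some j \<and> \<not> c ! j"
  proof (intro allI impI, rule ccontr)
    fix r assume r: "r < k" and "\<not> (\<exists>j<n. d r = Some j \<and> \<not> c ! j)"
    then have "f (unit_vertex k r) = f (replicate k False)"
      using unit[OF r] alpha c by (auto intro!: nth_equalityI)
    moreover have "unit_vertex k r \<noteq> replicate k False"
      using unit_nth[OF r r] r by auto
    ultimately show False using inj unit_length[of r] by (auto simp: inj_on_def)
  qed
  show "\<forall>r<k. \<forall>s<k. d r = d s \<longrightarrow> r = s"
  proof (intro allI impI, rule ccontr)
    fix r s assume r: "r < k" and s: "s < k" and "d r = d s" "r \<noteq> s"
    then have "f (unit_vertex k r) = f (unit_vertex k s)" and "unit_vertex k r \<noteq> unit_vertex k s"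
      using unit[OF r] unit[OF s] unit_nth[OF r r] unit_nth[OF s r] by auto
    then show False using inj unit_length by (auto simp: inj_on_def)
  qed
qed

lemma inj_join_map_normal_form:
  assumes "join_map k n f" and inj: "inj_on f {xs. length xs = k}"
  obtains c D where
    "\<And>xs. length xs = k \<Longrightarrow> f xs = map (\<lambda>j. c!j \<or> (\<exists>r<k. xs!r \<and> D r = j)) [0..<n]"
    "strict_mono_on {..<k} D" "f (replicate k False) = c" "cube_directions k n f = D ` {..<k}"
proof -
  obtain c d where c: "length c = n"
    and f: "\<And>xs::bool list. length xs = k \<Longrightarrow>
      f xs = map (\<lambda>j. c!j \<or> (\<exists>r<k. xs!r \<and> d r = Some j)) [0..<n]"
    and d: "\<And>r s j j'. r < s \<Longrightarrow> s < k \<Longrightarrow> d r = Some j \<Longrightarrow> d s = Some j' \<Longrightarrow> j \<le> j'"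
    using assms(1) unfolding join_map_def by blast
  note assignment = inj_join_map_assignment[OF c f inj]
  obtain D where D: "\<And>r. r < k \<Longrightarrow> d r = Some (D r) \<and> D r < n \<and> \<not> c ! D r"
    using assignment(1) by metis
  have "strict_mono_on {..<k} D"
  proof (rule strict_mono_onI)
    fix r s assume "r \<in> {..<k}" "s \<in> {..<k}" and rs: "r < s"
    then have r: "r < k" and s: "s < k" by auto
    have "d r \<noteq> d s" using assignment(2) r s rs by blast
    then have "D r \<le> D s" "D r \<noteq> D s"
      using d[OF rs s] D[OF r] D[OF s] by auto
    then show "D r < D s" by simp
  qed
  moreover have normal: "f xs = map (\<lambda>j. c!j \<or> (\<exists>r<k. xs!r \<and> D r = j)) [0..<n]"
    if "length xs = k" for xs
  proof -
    have "(\<exists>r<k. xs!r \<and> d r = Some j) \<longleftrightarrow> (\<exists>r<k. xs!r \<and> D r = j)" for j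
      using D by auto
    then show ?thesis using f[OF that] by simp
  qed
  moreover have "f (replicate k False) = c" "cube_directions k n f = D ` {..<k}"
    using normal[of "replicate k True"] normal[of "replicate k False"] D c
    by (auto simp: cube_directions_def map_nth cong: conj_cong)
  ultimately show ?thesis using that by blast
qed

lemma strict_mono_on_lessThan_image_eq:
  assumes "strict_mono_on {..<k} (D::nat \<Rightarrow> nat)" "strict_mono_on {..<k} D'"
    and "D ` {..<k} = D' ` {..<k}" and "r < k"
  shows "D r = D' r"
proof -
  have "sorted_wrt (<) (map D [0..<k])" "sorted_wrt (<) (map D' [0..<k])"
    using assms(1,2) unfolding sorted_wrt_iff_nth_less strict_mono_on_def by auto
  moreover have "set (map D [0..<k]) = set (map D' [0..<k])"
    using assms(3) by (simp add: atLeast0LessThan)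
  ultimately have "map D [0..<k] = map D' [0..<k]"
    by (metis sorted_distinct_set_unique strict_sorted_iff)
  then show ?thesis using assms(4) by (metis add_0 diff_zero nth_map_upt)
qed

lemma card_cube_directions:
  assumes "join_map k n f" "inj_on f {xs. length xs = k}"
  shows "card (cube_directions k n f) = k"
proof -
  obtain c D where
    "\<And>xs. length xs = k \<Longrightarrow> f xs = map (\<lambda>j. c!j \<or> (\<exists>r<k. xs!r \<and> D r = j)) [0..<n]"
    "strict_mono_on {..<k} D" "f (replicate k False) = c" "cube_directions k n f = D ` {..<k}"
    using inj_join_map_normal_form[OF assms] by blast
  then show ?thesis by (simp add: card_image strict_mono_on_imp_inj_on)
qed

lemma inj_join_map_eqI:
  assumes f: "join_map k n f" "inj_on f {xs. length xs = k}"
    and g: "join_map k n g" "inj_on g {xs. length xs = k}"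
    and alpha: "f (replicate k False) = g (replicate k False)"
    and omega: "f (replicate k True) = g (replicate k True)"
    and xs: "length xs = k"
  shows "f xs = g xs"
proof -
  obtain c D where
    f_eq: "\<And>xs. length xs = k \<Longrightarrow> f xs = map (\<lambda>j. c!j \<or> (\<exists>r<k. xs!r \<and> D r = j)) [0..<n]"
    and D: "strict_mono_on {..<k} D" "f (replicate k False) = c"
      "cube_directions k n f = D ` {..<k}"
    using inj_join_map_normal_form[OF f] by blast
  obtain c' D' where
    g_eq: "\<And>xs. length xs = k \<Longrightarrow> g xs = map (\<lambda>j. c'!j \<or> (\<exists>r<k. xs!r \<and> D' r = j)) [0..<n]"
    and D': "strict_mono_on {..<k} D'" "g (replicate k False) = c'"
      "cube_directions k n g = D' ` {..<k}"
    using inj_join_map_normal_form[OF g] by blast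
  have "cube_directions k n f = cube_directions k n g"
    using alpha omega by (simp add: cube_directions_def)
  then have "D r = D' r" if "r < k" for r
    using strict_mono_on_lessThan_image_eq[OF D(1) D'(1) _ that] D(3) D'(3) by simp
  then have "(\<exists>r<k. xs!r \<and> D r = j) \<longleftrightarrow> (\<exists>r<k. xs!r \<and> D' r = j)" for j
    by auto
  moreover have "c = c'" using alpha D(2) D'(2) by simp
  ultimately show ?thesis using f_eq[OF xs] g_eq[OF xs] by simp
qed

section \<open>Ordered partitions and their refinement\<close>

definition prefix_union :: "nat set list \<Rightarrow> nat \<Rightarrow> nat set" where
  "prefix_union P i = \<Union> (set (take i P))"

lemma prefix_union_0 [simp]: "prefix_union P 0 = {}"
  by (simp add: prefix_union_def)

lemma prefix_union_Suc: "i < length P \<Longrightarrow> prefix_union P (Suc i) = prefix_union P i \<union> P ! i"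
  by (auto simp: prefix_union_def take_Suc_conv_app_nth)

lemma prefix_union_beyond: "length P \<le> i \<Longrightarrow> prefix_union P i = \<Union> (set P)"
  by (simp add: prefix_union_def)

lemma prefix_union_mono: "i \<le> j \<Longrightarrow> prefix_union P i \<subseteq> prefix_union P j"
  unfolding prefix_union_def by (meson Sup_subset_mono set_take_subset_set_take)

lemma nth_subset_prefix_union: "l < i \<Longrightarrow> l < length P \<Longrightarrow> P ! l \<subseteq> prefix_union P i"
  unfolding prefix_union_def by (auto simp: in_set_conv_nth intro!: exI[of _ l])

lemma ordered_partitions_iff:
  "P \<in> ordered_partitions n \<longleftrightarrow>
    (\<forall>i<length P. P ! i \<noteq> {} \<and> P ! i \<inter> prefix_union P i = {}) \<and> prefix_union P (length P) = {1..n}"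
proof
  assume P: "P \<in> ordered_partitions n"
  have "P ! i \<inter> prefix_union P i = {}" if "i < length P" for i
  proof -
    have "P ! i \<inter> P ! l = {}" if "l < i" for l
      using P \<open>i < length P\<close> that unfolding ordered_partitions_def by auto
    then show ?thesis unfolding prefix_union_def by (auto simp: in_set_conv_nth) blast
  qed
  then show "(\<forall>i<length P. P ! i \<noteq> {} \<and> P ! i \<inter> prefix_union P i = {})
      \<and> prefix_union P (length P) = {1..n}"
    using P unfolding ordered_partitions_def by (auto simp: prefix_union_beyond)
next
  assume a: "(\<forall>i<length P. P ! i \<noteq> {} \<and> P ! i \<inter> prefix_union P i = {})
      \<and> prefix_union P (length P) = {1..n}"
  have "P ! i \<inter> P ! j = {}" if "i < length P" "j < length P" "i < j" for i j
    using a that nth_subset_prefix_union[of i j P] by blast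
  then have "P ! i \<inter> P ! j = {}" if "i < length P" "j < length P" "i \<noteq> j" for i j
    using that by (metis Int_commute nat_neq_iff)
  then show "P \<in> ordered_partitions n"
    using a unfolding ordered_partitions_def by (auto simp: in_set_conv_nth prefix_union_beyond)
qed

context
  fixes n P assumes P: "P \<in> ordered_partitions n"
begin

lemma ordered_partition_nth_nonempty: "i < length P \<Longrightarrow> P ! i \<noteq> {}"
  using P ordered_partitions_iff by blast

lemma ordered_partition_nth_disjoint: "i < length P \<Longrightarrow> P ! i \<inter> prefix_union P i = {}"
  using P ordered_partitions_iff by blast

lemma ordered_partition_nth_eq: "i < length P \<Longrightarrow> P ! i = prefix_union P (Suc i) - prefix_union P i"
  using prefix_union_Suc ordered_partition_nth_disjoint by blast

lemma ordered_partition_prefix_union_length: "prefix_union P (length P) = {1..n}"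
  using P ordered_partitions_iff by blast

lemma ordered_partition_prefix_union_subset: "prefix_union P i \<subseteq> {1..n}"
proof (cases "i \<le> length P")
  case True
  then show ?thesis using prefix_union_mono ordered_partition_prefix_union_length by blast
next
  case False
  then show ?thesis
    using prefix_union_beyond[of P i] prefix_union_beyond[of P "length P"]
      ordered_partition_prefix_union_length
    by simp
qed

lemma ordered_partition_nth_subset: "i < length P \<Longrightarrow> P ! i \<subseteq> {1..n}"
  using ordered_partition_prefix_union_subset nth_subset_prefix_union[of i "Suc i" P] by blast

lemma ordered_partition_nth_finite: "i < length P \<Longrightarrow> finite (P ! i)"
  using ordered_partition_nth_subset finite_subset by blast

lemma prefix_union_subset_iff:
  "i \<le> length P \<Longrightarrow> j \<le> length P \<Longrightarrow> prefix_union P i \<subseteq> prefix_union P j \<longleftrightarrow> i \<le> j"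
proof
  assume ij: "i \<le> length P" "j \<le> length P" "prefix_union P i \<subseteq> prefix_union P j"
  show "i \<le> j"
  proof (rule ccontr)
    assume "\<not> i \<le> j"
    then have "P ! j \<subseteq> prefix_union P i" "j < length P" using ij nth_subset_prefix_union by auto
    then show False
      using ij(3) ordered_partition_nth_nonempty ordered_partition_nth_disjoint by blast
  qed
qed (rule prefix_union_mono)

lemma sum_card_ordered_partition: "(\<Sum>i<length P. card (P ! i)) = n"
proof -
  have "(!) P ` {..<length P} = set P"
    by (auto simp: in_set_conv_nth)
  then have "\<Union> ((!) P ` {..<length P}) = {1..n}"
    using P by (simp add: ordered_partitions_def)
  moreover have "card (\<Union> ((!) P ` {..<length P})) = (\<Sum>i<length P. card (P ! i))"
    using P ordered_partition_nth_finite
    by (intro card_UN_disjoint) (auto simp: ordered_partitions_def)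
  ultimately show ?thesis by simp
qed

lemma length_ordered_partition_le: "length P \<le> n"
proof -
  have "(\<Sum>i<length P. 1) \<le> (\<Sum>i<length P. card (P ! i))"
    using ordered_partition_nth_nonempty ordered_partition_nth_finite
    by (intro sum_mono) (simp add: Suc_leI card_gt_0_iff)
  then show ?thesis using sum_card_ordered_partition by simp
qed

end

lemma ordered_partitions_sorted_wrt:
  "P \<in> ordered_partitions n \<longleftrightarrow>
    {} \<notin> set P \<and> sorted_wrt (\<lambda>A B. A \<inter> B = {}) P \<and> \<Union> (set P) = {1..n}"
proof -
  have "(\<forall>i<length P. \<forall>j<length P. i \<noteq> j \<longrightarrow> P ! i \<inter> P ! j = {}) \<longleftrightarrow>
      (\<forall>i j. i < j \<longrightarrow> j < length P \<longrightarrow> P ! i \<inter> P ! j = {})" (is "?ne \<longleftrightarrow> ?lt")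
  proof
    assume ?lt
    show ?ne
    proof (intro allI impI)
      fix i j assume "i < length P" "j < length P" "i \<noteq> j"
      then consider "i < j" | "j < i" by linarith
      then show "P ! i \<inter> P ! j = {}"
        using \<open>?lt\<close> \<open>i < length P\<close> \<open>j < length P\<close> by cases blast+
    qed
  qed auto
  moreover have "{} \<notin> set P \<longleftrightarrow> (\<forall>A\<in>set P. A \<noteq> {})" by blast
  ultimately show ?thesis
    unfolding ordered_partitions_def sorted_wrt_iff_nth_less mem_Collect_eq by argo
qed

lemma id_take_nth_nth_drop:
  "Suc i < length P \<Longrightarrow> P = take i P @ P ! i # P ! Suc i # drop (Suc (Suc i)) P"
  by (simp add: Cons_nth_drop_Suc id_take_nth_drop)

lemma merge_step_iff: "merge_step P Q \<longleftrightarrow> (\<exists>xs A B ys. P = xs @ A # B # ys \<and> Q = xs @ (A \<union> B) # ys)"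
proof
  assume "merge_step P Q"
  then obtain i where i: "Suc i < length P"
    and Q: "Q = take i P @ [P ! i \<union> P ! Suc i] @ drop (Suc (Suc i)) P"
    by (auto simp: merge_step_def)
  then show "\<exists>xs A B ys. P = xs @ A # B # ys \<and> Q = xs @ (A \<union> B) # ys"
    using id_take_nth_nth_drop[OF i] by auto
next
  assume "\<exists>xs A B ys. P = xs @ A # B # ys \<and> Q = xs @ (A \<union> B) # ys"
  then obtain xs A B ys where "P = xs @ A # B # ys" "Q = xs @ (A \<union> B) # ys" by blast
  then show "merge_step P Q"
    unfolding merge_step_def by (intro exI[of _ "length xs"]) (simp add: nth_append)
qed

lemma merge_in_ordered_partitions:
  "xs @ A # B # ys \<in> ordered_partitions n \<Longrightarrow> xs @ (A \<union> B) # ys \<in> ordered_partitions n"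
  unfolding ordered_partitions_sorted_wrt by (auto simp: sorted_wrt_append)

lemma split_in_ordered_partitions:
  "xs @ (A \<union> B) # ys \<in> ordered_partitions n \<Longrightarrow> A \<noteq> {} \<Longrightarrow> B \<noteq> {} \<Longrightarrow> A \<inter> B = {} \<Longrightarrow>
    xs @ A # B # ys \<in> ordered_partitions n"
  unfolding ordered_partitions_sorted_wrt by (auto simp: sorted_wrt_append)

lemma length_refine_le: "refine_le P Q \<Longrightarrow> length Q \<le> length P \<and> (length Q = length P \<longrightarrow> P = Q)"
  unfolding refine_le_def
  by (induction rule: rtranclp_induct) (auto simp: merge_step_iff)

lemma refine_le_antisym: "refine_le P Q \<Longrightarrow> refine_le Q P \<Longrightarrow> P = Q"
  using length_refine_le by (metis le_antisym)

definition cuts :: "nat set list \<Rightarrow> nat set set" where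
  "cuts P = prefix_union P ` {0..length P}"

lemma prefix_union_merge:
  "prefix_union (xs @ (A \<union> B) # ys) j =
    (if j \<le> length xs then prefix_union (xs @ A # B # ys) j
     else prefix_union (xs @ A # B # ys) (Suc j))"
proof (cases "j \<le> length xs")
  case False
  then obtain m where "j = length xs + Suc m"
    using less_imp_Suc_add by (metis add_Suc_right not_le)
  then show ?thesis by (auto simp: prefix_union_def take_add)
qed (simp add: prefix_union_def)

lemma cuts_merge_subset: "cuts (xs @ (A \<union> B) # ys) \<subseteq> cuts (xs @ A # B # ys)"
  unfolding cuts_def by (auto simp: prefix_union_merge)

lemma cuts_subset_cuts_merge:
  "cuts (xs @ A # B # ys) - {prefix_union (xs @ A # B # ys) (Suc (length xs))}
    \<subseteq> cuts (xs @ (A \<union> B) # ys)"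
proof
  fix X assume "X \<in> cuts (xs @ A # B # ys) - {prefix_union (xs @ A # B # ys) (Suc (length xs))}"
  then have X_cut: "X \<in> cuts (xs @ A # B # ys)"
    and X_ne: "X \<noteq> prefix_union (xs @ A # B # ys) (Suc (length xs))" by auto
  from X_cut obtain j where j: "j \<le> Suc (Suc (length xs + length ys))"
    and X: "X = prefix_union (xs @ A # B # ys) j"
    by (auto simp: cuts_def)
  then have "j \<noteq> Suc (length xs)" using X_ne by auto
  show "X \<in> cuts (xs @ (A \<union> B) # ys)"
  proof (cases "j \<le> length xs")
    case True
    then show ?thesis using X by (auto simp: cuts_def prefix_union_merge)
  next
    case False
    then have "X = prefix_union (xs @ (A \<union> B) # ys) (j - 1)" "j - 1 \<le> Suc (length xs + length ys)"
      using X j \<open>j \<noteq> Suc (length xs)\<close> by (auto simp: prefix_union_merge)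
    then show ?thesis by (auto simp: cuts_def)
  qed
qed

lemma refine_le_cuts: "refine_le P Q \<Longrightarrow> cuts Q \<subseteq> cuts P"
  unfolding refine_le_def
  by (induction rule: rtranclp_induct)
    (auto simp: merge_step_iff dest!: subsetD[OF cuts_merge_subset])

lemma cuts_ordered_partition: "P \<in> ordered_partitions n \<Longrightarrow> {} \<in> cuts P \<and> {1..n} \<in> cuts P"
  unfolding cuts_def using ordered_partition_prefix_union_length
  by (metis prefix_union_0 atLeastAtMost_iff image_eqI le0 order_refl)

lemma strict_mono_on_card_prefix_union:
  assumes "P \<in> ordered_partitions n"
  shows "strict_mono_on {..<Suc (length P)} (\<lambda>i. card (prefix_union P i))"
proof (rule strict_mono_onI)
  fix i j assume "i \<in> {..<Suc (length P)}" "j \<in> {..<Suc (length P)}" "i < j"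
  then have "prefix_union P i \<subseteq> prefix_union P j" "\<not> prefix_union P j \<subseteq> prefix_union P i"
    using prefix_union_subset_iff[OF assms, of i j] prefix_union_subset_iff[OF assms, of j i]
    by auto
  then have "prefix_union P i \<subset> prefix_union P j" by blast
  then show "card (prefix_union P i) < card (prefix_union P j)"
    using ordered_partition_prefix_union_subset[OF assms]
    by (meson finite_atLeastAtMost finite_subset psubset_card_mono)
qed

text \<open>The cardinalities of the cuts increase strictly, so the two chains list their common
  set of cuts in the same order.\<close>

lemma cuts_inject:
  assumes P: "P \<in> ordered_partitions n" and Q: "Q \<in> ordered_partitions n" and eq: "cuts P = cuts Q"
  shows "P = Q"
proof -
  let ?cP = "\<lambda>i. card (prefix_union P i)" and ?cQ = "\<lambda>i. card (prefix_union Q i)"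
  have image: "?cP ` {..<Suc (length P)} = ?cQ ` {..<Suc (length Q)}"
    using eq unfolding cuts_def atLeast0AtMost lessThan_Suc_atMost[symmetric] image_image[symmetric]
    by simp
  have "card (?cP ` {..<Suc (length P)}) = Suc (length P)"
    "card (?cQ ` {..<Suc (length Q)}) = Suc (length Q)"
    using strict_mono_on_card_prefix_union[OF P] strict_mono_on_card_prefix_union[OF Q]
    by (simp_all add: card_image strict_mono_on_imp_inj_on)
  then have len: "length P = length Q" using image by simp
  have prefix: "prefix_union P i = prefix_union Q i" if i: "i \<le> length P" for i
  proof -
    have "prefix_union P i \<in> cuts P" using i by (auto simp: cuts_def)
    then have "prefix_union P i \<in> cuts Q" using eq by simp
    then obtain j where j: "j \<le> length Q" "prefix_union P i = prefix_union Q j"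
      by (auto simp: cuts_def)
    have "strict_mono_on {..<Suc (length P)} ?cQ"
      using strict_mono_on_card_prefix_union[OF Q] len by simp
    then have "?cP i = ?cQ i"
      using strict_mono_on_lessThan_image_eq[OF strict_mono_on_card_prefix_union[OF P]] image len i
      by simp
    then have "?cQ j = ?cQ i" using j by simp
    then have "j = i"
      using strict_mono_on_imp_inj_on[OF strict_mono_on_card_prefix_union[OF Q]] i j len
      by (auto simp: inj_on_def)
    then show ?thesis using j by simp
  qed
  show ?thesis
  proof (rule nth_equalityI)
    fix i assume "i < length P"
    then have "P ! i = prefix_union P (Suc i) - prefix_union P i"
      "Q ! i = prefix_union Q (Suc i) - prefix_union Q i"
      using ordered_partition_nth_eq[OF P] ordered_partition_nth_eq[OF Q] len by auto
    then show "P ! i = Q ! i"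
      using prefix[of i] prefix[of "Suc i"] \<open>i < length P\<close> by simp
  qed (rule len)
qed

text \<open>Merging the two blocks around a cut outside \<open>K\<close> deletes that cut; iterating
  keeps exactly the cuts in \<open>K\<close>.\<close>

lemma refine_le_cuts_inter:
  assumes "P \<in> ordered_partitions n" "{} \<in> K" "{1..n} \<in> K"
  shows "\<exists>Q\<in>ordered_partitions n. refine_le P Q \<and> cuts Q = cuts P \<inter> K"
  using assms(1)
proof (induction "length P" arbitrary: P rule: less_induct)
  case less
  note P = less.prems
  show ?case
  proof (cases "cuts P \<subseteq> K")
    case True
    then show ?thesis using P by (intro bexI[of _ P]) (auto simp: refine_le_def)
  next
    case False
    then obtain X where "X \<in> cuts P" "X \<notin> K" by blast
    then obtain i where i: "i \<le> length P" "prefix_union P i \<notin> K"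
      by (auto simp: cuts_def)
    have "i \<noteq> 0" using i(2) assms(2) by (metis prefix_union_0)
    moreover have "i \<noteq> length P"
      using i(2) assms(3) ordered_partition_prefix_union_length[OF P] by metis
    ultimately have "Suc (i - 1) < length P" "Suc (i - 1) = i" using i(1) by simp_all
    then obtain xs A B ys where P_eq: "P = xs @ A # B # ys" and "Suc (length xs) = i"
      using id_take_nth_nth_drop by (metis length_take min.absorb4 Suc_lessD)
    define P' where "P' = xs @ (A \<union> B) # ys"
    have P': "P' \<in> ordered_partitions n"
      using merge_in_ordered_partitions P P_eq by (simp add: P'_def)
    have "cuts P' \<inter> K = cuts P \<inter> K"
      using cuts_merge_subset[of xs A B ys] cuts_subset_cuts_merge[of xs A B ys] i(2)
        \<open>Suc (length xs) = i\<close>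
      unfolding P'_def P_eq[symmetric] by blast
    moreover have "length P' < length P"
      using P_eq by (simp add: P'_def)
    ultimately obtain Q where "Q \<in> ordered_partitions n" "refine_le P' Q" "cuts Q = cuts P \<inter> K"
      using less.hyps[OF _ P'] by auto
    moreover have "merge_step P P'"
      unfolding merge_step_iff P'_def using P_eq by blast
    ultimately show ?thesis
      unfolding refine_le_def by (meson converse_rtranclp_into_rtranclp)
  qed
qed

lemma refine_le_iff_cuts:
  assumes "P \<in> ordered_partitions n" "Q \<in> ordered_partitions n"
  shows "refine_le P Q \<longleftrightarrow> cuts Q \<subseteq> cuts P"
proof
  assume "cuts Q \<subseteq> cuts P"
  obtain Q' where "Q' \<in> ordered_partitions n" "refine_le P Q'" "cuts Q' = cuts P \<inter> cuts Q"
    using refine_le_cuts_inter[OF assms(1)] cuts_ordered_partition[OF assms(2)] by blast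
  then show "refine_le P Q"
    using cuts_inject[OF _ assms(2)] \<open>cuts Q \<subseteq> cuts P\<close> by (metis inf.absorb_iff2)
qed (rule refine_le_cuts)

lemma refine_le_one_block:
  assumes "P \<in> ordered_partitions n" "1 \<le> n"
  shows "refine_le P [{1..n}]"
proof -
  have "[{1..n}] \<in> ordered_partitions n" using assms(2) by (auto simp: ordered_partitions_def)
  moreover have "cuts [{1..n}] \<subseteq> cuts P"
    using cuts_ordered_partition[OF assms(1)] by (auto simp: cuts_def prefix_union_def le_Suc_eq)
  ultimately show ?thesis using refine_le_iff_cuts[OF assms(1)] by blast
qed

lemma refine_le_lub:
  assumes "S \<subseteq> ordered_partitions n" "S \<noteq> {}"
  shows "\<exists>U\<in>ordered_partitions n. (\<forall>P\<in>S. refine_le P U)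
    \<and> (\<forall>V\<in>ordered_partitions n. (\<forall>P\<in>S. refine_le P V) \<longrightarrow> refine_le U V)"
proof -
  obtain P0 where P0: "P0 \<in> S" using assms(2) by blast
  define K where "K = {X. \<forall>P\<in>S. X \<in> cuts P}"
  have "{} \<in> K" "{1..n} \<in> K"
    using assms(1) cuts_ordered_partition by (auto simp: K_def)
  then obtain U where U: "U \<in> ordered_partitions n" "cuts U = cuts P0 \<inter> K"
    using refine_le_cuts_inter P0 assms(1) by blast
  then have "cuts U = K" using P0 by (auto simp: K_def)
  then show ?thesis
    using U(1) assms(1) refine_le_iff_cuts by (auto simp: K_def) blast+
qed

lemma refine_le_minimal_iff:
  assumes P: "P \<in> ordered_partitions n"
  shows "(\<forall>Q\<in>ordered_partitions n. refine_le Q P \<longrightarrow> Q = P) \<longleftrightarrow> (\<forall>A\<in>set P. is_singleton A)"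
proof
  assume min: "\<forall>Q\<in>ordered_partitions n. refine_le Q P \<longrightarrow> Q = P"
  show "\<forall>A\<in>set P. is_singleton A"
  proof (rule ccontr)
    assume "\<not> (\<forall>A\<in>set P. is_singleton A)"
    then obtain i where i: "i < length P" and ns: "\<not> is_singleton (P ! i)"
      by (auto simp: in_set_conv_nth)
    obtain a where a: "a \<in> P ! i" using ordered_partition_nth_nonempty[OF P i] by blast
    then have rest: "P ! i - {a} \<noteq> {}" using ns by (auto intro: is_singletonI')
    define Q where "Q = take i P @ {a} # (P ! i - {a}) # drop (Suc i) P"
    have P_eq: "take i P @ ({a} \<union> (P ! i - {a})) # drop (Suc i) P = P"
      using a id_take_nth_drop[OF i, symmetric]
      by (simp only: Un_Diff_cancel insert_absorb Un_insert_left sup_bot_left)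
    have "Q \<in> ordered_partitions n"
      unfolding Q_def using P rest
      by (intro split_in_ordered_partitions) (simp_all only: P_eq, auto)
    moreover have "merge_step Q P"
      unfolding merge_step_iff Q_def
      by (intro exI[of _ "take i P"] exI[of _ "{a}"] exI[of _ "P ! i - {a}"]
          exI[of _ "drop (Suc i) P"]
          conjI[OF refl P_eq[symmetric]])
    then have "refine_le Q P" by (simp add: refine_le_def)
    moreover have "length Q = Suc (length P)" using i by (simp add: Q_def)
    ultimately show False using min by fastforce
  qed
next
  assume sg: "\<forall>A\<in>set P. is_singleton A"
  have "length P = n"
    using sum_card_ordered_partition[OF P] sg by (simp add: is_singleton_altdef)
  show "\<forall>Q\<in>ordered_partitions n. refine_le Q P \<longrightarrow> Q = P"
  proof (intro ballI impI)
    fix Q assume "Q \<in> ordered_partitions n" "refine_le Q P"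
    then show "Q = P"
      using length_refine_le[of Q P] length_ordered_partition_le[of Q n] \<open>length P = n\<close> by simp
  qed
qed

lemma permutation_singleton_partition:
  assumes \<sigma>: "\<sigma> permutes {1..n}"
  shows "map (\<lambda>i. {\<sigma> i}) [1..<Suc n] \<in> ordered_partitions n"
proof -
  have "sorted_wrt (\<lambda>A B. A \<inter> B = {}) (map (\<lambda>i. {\<sigma> i}) [1..<Suc n])"
    using permutes_inj_on[OF \<sigma>]
    by (intro sorted_wrt_map_mono[OF sorted_wrt_upt]) (auto dest: inj_onD)
  moreover have "\<Union> (set (map (\<lambda>i. {\<sigma> i}) [1..<Suc n])) = \<sigma> ` {1..n}"
    by (auto simp: atLeastLessThanSuc_atLeastAtMost)
  ultimately show ?thesis
    unfolding ordered_partitions_sorted_wrt using permutes_image[OF \<sigma>] by auto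
qed

lemma singleton_partition_permutation:
  assumes P: "P \<in> ordered_partitions n" and sg: "\<forall>A\<in>set P. is_singleton A"
  obtains \<sigma> where "\<sigma> permutes {1..n}" "map (\<lambda>i. {\<sigma> i}) [1..<Suc n] = P"
proof -
  have len: "length P = n"
    using sum_card_ordered_partition[OF P] sg by (simp add: is_singleton_altdef)
  define \<sigma> where "\<sigma> i = (if i \<in> {1..n} then the_elem (P ! (i - 1)) else i)" for i
  have block: "P ! (i - 1) = {\<sigma> i}" if "i \<in> {1..n}" for i
    using sg that len by (auto simp: \<sigma>_def is_singleton_the_elem)
  have "set P = (\<lambda>i. P ! (i - 1)) ` {1..n}"
  proof (intro equalityI subsetI)
    fix A assume "A \<in> set P"
    then obtain k where "k < length P" "A = P ! k" by (auto simp: in_set_conv_nth)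
    then show "A \<in> (\<lambda>i. P ! (i - 1)) ` {1..n}"
      using len by (intro image_eqI[of _ _ "Suc k"]) auto
  qed (use len in auto)
  then have "\<sigma> ` {1..n} = \<Union> (set P)" using block by auto
  then have "\<sigma> ` {1..n} = {1..n}" using P by (simp add: ordered_partitions_def)
  then have "bij_betw \<sigma> {1..n} {1..n}"
    by (simp add: bij_betw_def eq_card_imp_inj_on)
  then have "\<sigma> permutes {1..n}"
    by (rule bij_imp_permutes) (auto simp: \<sigma>_def)
  moreover have "map (\<lambda>i. {\<sigma> i}) [1..<Suc n] = P"
  proof (rule nth_equalityI)
    fix i assume "i < length (map (\<lambda>i. {\<sigma> i}) [1..<Suc n])"
    then show "map (\<lambda>i. {\<sigma> i}) [1..<Suc n] ! i = P ! i"
      using block[of "Suc i"] by (simp del: upt_Suc)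
  qed (use len in simp)
  ultimately show ?thesis using that by blast
qed

lemma bij_betw_singleton_partitions:
  "bij_betw (\<lambda>\<sigma>. map (\<lambda>i. {\<sigma> i}) [1..<Suc n]) {\<sigma>. \<sigma> permutes {1..n}}
    {P \<in> ordered_partitions n. \<forall>A\<in>set P. is_singleton A}"
  unfolding bij_betw_def
proof (intro conjI)
  show "inj_on (\<lambda>\<sigma>. map (\<lambda>i. {\<sigma> i}) [1..<Suc n]) {\<sigma>. \<sigma> permutes {1..n}}"
  proof (rule inj_onI)
    fix \<sigma> \<tau> assume "\<sigma> \<in> {\<sigma>. \<sigma> permutes {1..n}}" "\<tau> \<in> {\<sigma>. \<sigma> permutes {1..n}}"
      and eq: "map (\<lambda>i. {\<sigma> i}) [1..<Suc n] = map (\<lambda>i. {\<tau> i}) [1..<Suc n]"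
    then have "\<sigma> permutes {1..n}" "\<tau> permutes {1..n}" by auto
    moreover have "\<sigma> i = \<tau> i" if "i \<in> {1..n}" for i
      using eq that unfolding map_eq_conv
      by (simp add: atLeastLessThanSuc_atLeastAtMost del: upt_Suc)
    ultimately show "\<sigma> = \<tau>"
      by (metis permutes_not_in ext)
  qed
  show "(\<lambda>\<sigma>. map (\<lambda>i. {\<sigma> i}) [1..<Suc n]) ` {\<sigma>. \<sigma> permutes {1..n}} =
      {P \<in> ordered_partitions n. \<forall>A\<in>set P. is_singleton A}"
    using permutation_singleton_partition singleton_partition_permutation
    by (auto simp del: upt_Suc) (metis (mono_tags) image_eqI mem_Collect_eq)
qed

text \<open>\<open>face_refines P Q\<close>: the face of \<open>\<box>^n\<close> spanned by each block of \<open>P\<close> lies in the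
  face spanned by some block of \<open>Q\<close>.\<close>

definition face_refines :: "nat set list \<Rightarrow> nat set list \<Rightarrow> bool" where
  "face_refines P Q \<longleftrightarrow> (\<forall>i<length P. \<exists>j<length Q.
     prefix_union Q j \<subseteq> prefix_union P i \<and> prefix_union P (Suc i) \<subseteq> prefix_union Q (Suc j))"

lemma face_refines_merge: "face_refines (xs @ A # B # ys) (xs @ (A \<union> B) # ys)"
  unfolding face_refines_def
proof (intro allI impI)
  fix i assume i: "i < length (xs @ A # B # ys)"
  let ?P = "xs @ A # B # ys" and ?j = "if i \<le> length xs then i else i - 1"
  have "prefix_union ?P i \<subseteq> prefix_union ?P (Suc (Suc i))"
    "prefix_union ?P (Suc i) \<subseteq> prefix_union ?P (Suc (Suc i))" by (simp_all add: prefix_union_mono)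
  moreover have "prefix_union ?P (i - 1) \<subseteq> prefix_union ?P i" by (simp add: prefix_union_mono)
  ultimately have "prefix_union (xs @ (A \<union> B) # ys) ?j \<subseteq> prefix_union ?P i
      \<and> prefix_union ?P (Suc i) \<subseteq> prefix_union (xs @ (A \<union> B) # ys) (Suc ?j)"
    by (auto simp: prefix_union_merge)
  moreover have "?j < length (xs @ (A \<union> B) # ys)" using i by auto
  ultimately show "\<exists>j<length (xs @ (A \<union> B) # ys).
      prefix_union (xs @ (A \<union> B) # ys) j \<subseteq> prefix_union ?P i
      \<and> prefix_union ?P (Suc i) \<subseteq> prefix_union (xs @ (A \<union> B) # ys) (Suc j)"
    by blast
qed

lemma face_refines_trans: "face_refines P Q \<Longrightarrow> face_refines Q R \<Longrightarrow> face_refines P R"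
  unfolding face_refines_def by (meson order_trans)

lemma refine_le_face_refines: "refine_le P Q \<Longrightarrow> face_refines P Q"
  unfolding refine_le_def
proof (induction rule: rtranclp_induct)
  case base
  then show ?case by (auto simp: face_refines_def)
next
  case (step Q R)
  then show ?case
    using face_refines_trans face_refines_merge by (auto simp: merge_step_iff)
qed

text \<open>A cut \<open>X\<close> of \<open>Q\<close> is the largest cut of \<open>P\<close> contained in \<open>X\<close>.\<close>

lemma face_refines_cuts:
  assumes P: "P \<in> ordered_partitions n" and Q: "Q \<in> ordered_partitions n" and fr: "face_refines P Q"
  shows "cuts Q \<subseteq> cuts P"
proof
  fix X assume "X \<in> cuts Q"
  then obtain j where j: "j \<le> length Q" "X = prefix_union Q j" by (auto simp: cuts_def)
  define S where "S = {i. i \<le> length P \<and> prefix_union P i \<subseteq> X}"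
  define i where "i = Max S"
  have fin: "finite S" by (simp add: S_def)
  have "0 \<in> S" by (simp add: S_def)
  then have "i \<in> S" unfolding i_def using Max_in[OF fin] by blast
  then have i: "i \<le> length P" "prefix_union P i \<subseteq> X" by (simp_all add: S_def)
  show "X \<in> cuts P"
  proof (cases "i = length P")
    case True
    then have "X = prefix_union P i"
      using i j ordered_partition_prefix_union_subset[OF Q, of j]
        ordered_partition_prefix_union_length[OF P]
      by auto
    then show ?thesis using i(1) by (auto simp: cuts_def)
  next
    case False
    then have "i < length P" using i(1) by simp
    then obtain j' where j': "j' < length Q" "prefix_union Q j' \<subseteq> prefix_union P i"
      "prefix_union P (Suc i) \<subseteq> prefix_union Q (Suc j')"
      using fr unfolding face_refines_def by blast
    have "Suc i \<notin> S"
      using Max_ge[OF fin, of "Suc i"] by (auto simp: i_def)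
    then have "\<not> prefix_union P (Suc i) \<subseteq> X"
      using \<open>i < length P\<close> by (simp add: S_def)
    then have "j \<le> j'"
      using j'(3) j prefix_union_mono[of "Suc j'" j Q] by (meson not_less_eq_eq order_trans)
    moreover have "j' \<le> j"
      using j'(1,2) i(2) j prefix_union_subset_iff[OF Q, of j' j] by auto
    ultimately have "X = prefix_union P i"
      using i(2) j j'(2) by auto
    then show ?thesis using i(1) by (auto simp: cuts_def)
  qed
qed

lemma refine_le_iff_face_refines:
  "P \<in> ordered_partitions n \<Longrightarrow> Q \<in> ordered_partitions n \<Longrightarrow> refine_le P Q \<longleftrightarrow> face_refines P Q"
  using refine_le_face_refines face_refines_cuts refine_le_iff_cuts by blast

section \<open>Transport along an order isomorphism\<close>

context
  fixes f :: "'a \<Rightarrow> 'b" and A B and le :: "'a \<Rightarrow> 'a \<Rightarrow> bool" and le' :: "'b \<Rightarrow> 'b \<Rightarrow> bool"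
  assumes bij: "bij_betw f A B" and iso: "\<And>x y. x \<in> A \<Longrightarrow> y \<in> A \<Longrightarrow> le x y \<longleftrightarrow> le' (f x) (f y)"
begin

lemma order_iso_antisym:
  assumes "\<And>a b. a \<in> B \<Longrightarrow> b \<in> B \<Longrightarrow> le' a b \<Longrightarrow> le' b a \<Longrightarrow> a = b"
  shows "\<forall>x\<in>A. \<forall>y\<in>A. le x y \<and> le y x \<longrightarrow> x = y"
proof (intro ballI impI)
  fix x y assume "x \<in> A" "y \<in> A" "le x y \<and> le y x"
  then have "f x = f y" using assms iso bij_betwE[OF bij] by blast
  then show "x = y" using \<open>x \<in> A\<close> \<open>y \<in> A\<close> bij_betw_imp_inj_on[OF bij] by (simp add: inj_on_eq_iff)
qed

lemma order_iso_minimal: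
  "f ` {x\<in>A. \<forall>y\<in>A. le y x \<longrightarrow> y = x} = {b\<in>B. \<forall>c\<in>B. le' c b \<longrightarrow> c = b}"
  using bij iso by (auto simp: bij_betw_def inj_on_eq_iff)

lemma order_iso_lub:
  assumes lub': "\<And>S. S \<subseteq> B \<Longrightarrow> S \<noteq> {} \<Longrightarrow>
    \<exists>u\<in>B. (\<forall>s\<in>S. le' s u) \<and> (\<forall>v\<in>B. (\<forall>s\<in>S. le' s v) \<longrightarrow> le' u v)"
    and S: "S \<subseteq> A" "S \<noteq> {}"
  shows "\<exists>u\<in>A. (\<forall>s\<in>S. le s u) \<and> (\<forall>v\<in>A. (\<forall>s\<in>S. le s v) \<longrightarrow> le u v)"
proof -
  obtain u' where u': "u' \<in> B" "\<forall>s\<in>f ` S. le' s u'" "\<forall>v\<in>B. (\<forall>s\<in>f ` S. le' s v) \<longrightarrow> le' u' v"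
    using lub'[of "f ` S"] S bij by (auto simp: bij_betw_def)
  then obtain u where "u \<in> A" "f u = u'" using bij by (auto simp: bij_betw_def)
  then show ?thesis
    using u' S iso bij by (intro bexI[of _ u]) (auto simp: bij_betw_def subset_iff)
qed

end

section \<open>Necklaces\<close>

lemma cells_necklace_iff:
  "z \<in> cells (necklace ns) m \<longleftrightarrow> fst z < length ns \<and> cube_hom m (ns ! fst z) (snd z)
     \<and> \<not> (0 < fst z \<and> snd z = const_map m (replicate (ns ! fst z) False))"
  by (cases z) (simp add: necklace_def)

lemma act_necklace: "act (necklace ns) m k h z = nnorm ns m (fst z, ccomp m (snd z) h)"
  by (simp add: necklace_def)

lemma is_neck_nth_pos: "is_neck ns \<Longrightarrow> i < length ns \<Longrightarrow> 0 < ns ! i"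
  unfolding is_neck_def by (metis less_le_trans nth_mem zero_less_one)

lemma const_map_True_neq_False:
  "0 < k \<Longrightarrow> const_map m (replicate k True) \<noteq> const_map m (replicate k False)"
  using const_map_inject replicate_True_neq_False by blast

lemma act_necklace_in_cells:
  assumes ns: "is_neck ns" and z: "z \<in> cells (necklace ns) k" and h: "cube_hom m k h"
  shows "act (necklace ns) m k h z \<in> cells (necklace ns) m"
proof -
  obtain i g where zi: "z = (i, g)" by (cases z)
  have i: "i < length ns" and g: "cube_hom k (ns ! i) g" using z zi
    by (auto simp: cells_necklace_iff)
  show ?thesis
  proof (cases "0 < i \<and> ccomp m g h = const_map m (replicate (ns ! i) False)")
    case True
    then have "const_map m (replicate (ns ! (i - 1)) True)
        \<noteq> const_map m (replicate (ns ! (i - 1)) False)"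
      using const_map_True_neq_False is_neck_nth_pos[OF ns, of "i - 1"] i by simp
    then show ?thesis using True i zi
      by (auto simp: act_necklace nnorm_def cells_necklace_iff cube_hom_const_map)
  next
    case False
    then show ?thesis using i g h zi
      by (auto simp: act_necklace nnorm_def cells_necklace_iff intro: cube_hom.hcomp)
  qed
qed

lemma bead_in_cells:
  assumes "is_neck ns" "i < length ns"
  shows "(i, cid (ns ! i)) \<in> cells (necklace ns) (ns ! i)"
  using assms is_neck_nth_pos cid_neq_const_map by (auto simp: cells_necklace_iff cube_hom.hid)

lemma act_necklace_bead:
  assumes "(i, g) \<in> cells (necklace ns) m"
  shows "act (necklace ns) m (ns ! i) g (i, cid (ns ! i)) = (i, g)"
  using assms by (auto simp: act_necklace nnorm_def ccomp_cid_left cells_necklace_iff)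

definition bead_vertex :: "nat list \<Rightarrow> nat \<Rightarrow> bool list \<Rightarrow> nat \<times> cmap" where
  "bead_vertex ns i w = act (necklace ns) 0 (ns ! i) (const_map 0 w) (i, cid (ns ! i))"

lemma bead_vertex_in_cells:
  "is_neck ns \<Longrightarrow> i < length ns \<Longrightarrow> length w = ns ! i \<Longrightarrow> bead_vertex ns i w \<in> cells (necklace ns) 0"
  unfolding bead_vertex_def using act_necklace_in_cells bead_in_cells cube_hom_const_map by blast

lemma bead_vertex_eq: "length w = ns ! i \<Longrightarrow> bead_vertex ns i w = nnorm ns 0 (i, const_map 0 w)"
  by (simp add: bead_vertex_def act_necklace ccomp_const_map cid_def)

lemma bead_vertex_inject:
  assumes "length w = ns ! i" "length w' = ns ! i" "bead_vertex ns i w = bead_vertex ns i w'"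
  shows "w = w'"
  using assms by (auto simp: bead_vertex_eq nnorm_def const_map_inject split: if_splits)

lemma nstart_eq_bead_vertex: "nstart ns = bead_vertex ns 0 (replicate (ns ! 0) False)"
  by (simp add: bead_vertex_eq nstart_def nnorm_def)

lemma nend_eq_bead_vertex:
  assumes "is_neck ns"
  shows "nend ns = bead_vertex ns (length ns - 1) (replicate (ns ! (length ns - 1)) True)"
proof -
  have "ns \<noteq> []" using assms by (simp add: is_neck_def)
  then show ?thesis
    using const_map_True_neq_False[OF is_neck_nth_pos[OF assms, of "length ns - 1"]]
    by (simp add: bead_vertex_eq nend_def nnorm_def last_conv_nth)
qed

lemma bead_vertex_alpha:
  assumes "is_neck ns" "0 < i" "i < length ns"
  shows "bead_vertex ns i (replicate (ns ! i) False) =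
    bead_vertex ns (i - 1) (replicate (ns ! (i - 1)) True)"
  using assms const_map_True_neq_False[OF is_neck_nth_pos[OF assms(1), of "i - 1"]]
  by (simp add: bead_vertex_eq nnorm_def)

section \<open>The canonical sub-necklace of an ordered partition\<close>

definition vertex :: "nat \<Rightarrow> nat set \<Rightarrow> bool list" where
  "vertex n X = map (\<lambda>j. Suc j \<in> X) [0..<n]"

lemma length_vertex [simp]: "length (vertex n X) = n"
  by (simp add: vertex_def)

lemma nth_vertex: "j < n \<Longrightarrow> vertex n X ! j = (Suc j \<in> X)"
  by (simp add: vertex_def)

lemma vertex_empty: "vertex n {} = replicate n False"
  by (auto simp: vertex_def intro!: nth_equalityI)

lemma vertex_full: "vertex n {1..n} = replicate n True"
  by (auto simp: vertex_def intro!: nth_equalityI)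

lemma subset_atLeastAtMost_SucE:
  assumes "x \<in> X" "X \<subseteq> {1..n}"
  obtains j where "x = Suc j" "j < n"
proof -
  have "x \<in> {1..n}" using assms by blast
  then show ?thesis by (intro that[of "x - 1"]) auto
qed

lemma vertex_inject:
  assumes "X \<subseteq> {1..n}" "Y \<subseteq> {1..n}" "vertex n X = vertex n Y"
  shows "X = Y"
proof -
  have eq: "Suc j \<in> X \<longleftrightarrow> Suc j \<in> Y" if "j < n" for j
    using assms(3) nth_vertex[OF that, of X] nth_vertex[OF that, of Y] by simp
  show ?thesis
  proof (intro subset_antisym subsetI)
    fix x assume "x \<in> X"
    moreover obtain j where "x = Suc j" "j < n" using \<open>x \<in> X\<close> assms(1)
      by (rule subset_atLeastAtMost_SucE)
    ultimately show "x \<in> Y" using eq by simp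
  next
    fix x assume "x \<in> Y"
    moreover obtain j where "x = Suc j" "j < n" using \<open>x \<in> Y\<close> assms(2)
      by (rule subset_atLeastAtMost_SucE)
    ultimately show "x \<in> X" using eq by simp
  qed
qed

lemma image_Suc_shift:
  assumes "X \<subseteq> {1..n}"
  shows "Suc ` {j. j < n \<and> Suc j \<in> X} = X"
proof (intro subset_antisym subsetI)
  fix x assume "x \<in> X"
  moreover obtain j where "x = Suc j" "j < n" using \<open>x \<in> X\<close> assms
    by (rule subset_atLeastAtMost_SucE)
  ultimately show "x \<in> Suc ` {j. j < n \<and> Suc j \<in> X}" by blast
qed auto

lemma count_true_vertex:
  assumes "X \<subseteq> {1..n}"
  shows "count_true (vertex n X) = card X"
proof -
  have "count_true (vertex n X) = card {j. j < n \<and> Suc j \<in> X}"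
    unfolding count_true_def vertex_def length_filter_conv_card
    by (intro arg_cong[where f=card]) auto
  also have "\<dots> = card (Suc ` {j. j < n \<and> Suc j \<in> X})"
    by (simp add: card_image)
  finally show ?thesis using image_Suc_shift[OF assms] by simp
qed

lemma count_true_take_vertex_less:
  assumes "j < n" "Suc j \<in> X"
  shows "count_true (take j (vertex n X)) < count_true (vertex n X)"
proof -
  have append: "count_true (xs @ ys) = count_true xs + count_true ys" for xs ys
    by (simp add: count_true_def)
  have "drop j (vertex n X) = True # drop (Suc j) (vertex n X)"
    using assms by (metis Cons_nth_drop_Suc length_vertex nth_vertex)
  then have "count_true (drop j (vertex n X)) > 0"
    by (simp add: count_true_def)
  then show ?thesis
    using append[of "take j (vertex n X)" "drop j (vertex n X)"] by simp
qed

lemma vertex_extend: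
  assumes "length a = n" "length b = n" "\<forall>j<n. a ! j \<longrightarrow> b ! j" "vertex n X = a"
  shows "vertex n (X \<union> Suc ` {j. j < n \<and> b ! j \<and> \<not> a ! j}) = b"
proof (rule nth_equalityI)
  fix j assume "j < length (vertex n (X \<union> Suc ` {j. j < n \<and> b ! j \<and> \<not> a ! j}))"
  then have j: "j < n" by simp
  have "Suc j \<in> X \<longleftrightarrow> a ! j" using assms(4) j nth_vertex by metis
  then show "vertex n (X \<union> Suc ` {j. j < n \<and> b ! j \<and> \<not> a ! j}) ! j = b ! j"
    using j assms(3) by (auto simp: nth_vertex)
qed (use assms in simp)

text \<open>Bead \<open>i\<close> is mapped onto the face of \<open>\<box>^n\<close> whose free coordinates are the block
  \<open>P ! i\<close> and whose fixed coordinates are 1 exactly on the earlier blocks.\<close>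

definition bead_face :: "nat \<Rightarrow> nat set list \<Rightarrow> nat \<Rightarrow> cmap" where
  "bead_face n P i = face_map (vertex n (P ! i)) (vertex n (prefix_union P i))"

definition canonical_subneck :: "nat \<Rightarrow> nat set list \<Rightarrow> subneck" where
  "canonical_subneck n P = (map card P, \<lambda>m z. if z \<in> cells (necklace (map card P)) m
       then ccomp m (bead_face n P (fst z)) (snd z) else undefined)"

definition in_bead_face :: "nat \<Rightarrow> nat set list \<Rightarrow> nat \<Rightarrow> bool list \<Rightarrow> bool" where
  "in_bead_face n P i w \<longleftrightarrow> length w = n \<and>
     (\<forall>j<n. (Suc j \<in> prefix_union P i \<longrightarrow> w ! j) \<and> (w ! j \<longrightarrow> Suc j \<in> prefix_union P (Suc i)))"

context
  fixes n P assumes P: "P \<in> ordered_partitions n"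
begin

lemma count_true_vertex_nth: "i < length P \<Longrightarrow> count_true (vertex n (P ! i)) = card (P ! i)"
  using count_true_vertex ordered_partition_nth_subset[OF P] by blast

lemma cube_hom_bead_face: "i < length P \<Longrightarrow> cube_hom (card (P ! i)) n (bead_face n P i)"
  using cube_hom_face_map[of "vertex n (prefix_union P i)" "vertex n (P ! i)"] count_true_vertex_nth
  by (simp add: bead_face_def)

lemma cube_hom_face_proj_vertex:
  "i < length P \<Longrightarrow> cube_hom n (card (P ! i)) (face_proj (vertex n (P ! i)))"
  using cube_hom_face_proj[of "vertex n (P ! i)"] count_true_vertex_nth by simp

lemma nth_bead_face:
  "i < length P \<Longrightarrow> length xs = card (P ! i) \<Longrightarrow> j < n \<Longrightarrow>
   bead_face n P i xs ! j = (if Suc j \<in> P ! i then xs ! count_true (take j (vertex n (P ! i)))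
     else Suc j \<in> prefix_union P i)"
  using nth_mask_fill[of j "vertex n (P ! i)" "vertex n (prefix_union P i)" xs]
    count_true_vertex_nth
  by (simp add: bead_face_def face_map_def nth_vertex)

lemma bead_face_in_bead_face:
  assumes "i < length P" "length xs = card (P ! i)"
  shows "in_bead_face n P i (bead_face n P i xs)"
  unfolding in_bead_face_def
  using cube_hom_length[OF cube_hom_bead_face[OF assms(1)] assms(2)] nth_bead_face[OF assms]
    prefix_union_Suc[OF assms(1)] ordered_partition_nth_disjoint[OF P assms(1)] by auto

lemma bead_face_alpha:
  assumes i: "i < length P"
  shows "bead_face n P i (replicate (card (P ! i)) False) = vertex n (prefix_union P i)"
proof (rule nth_equalityI)
  fix j assume "j < length (bead_face n P i (replicate (card (P ! i)) False))"
  then have j: "j < n" using cube_hom_length[OF cube_hom_bead_face[OF i]] by simp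
  show "bead_face n P i (replicate (card (P ! i)) False) ! j = vertex n (prefix_union P i) ! j"
    using nth_bead_face[OF i _ j] j ordered_partition_nth_disjoint[OF P i]
      count_true_vertex_nth[OF i]
      count_true_take_vertex_less[OF j, of "P ! i"]
    by (auto simp: nth_vertex)
qed (use cube_hom_length[OF cube_hom_bead_face[OF i]] in simp)

lemma bead_face_omega:
  assumes i: "i < length P"
  shows "bead_face n P i (replicate (card (P ! i)) True) = vertex n (prefix_union P (Suc i))"
proof (rule nth_equalityI)
  fix j assume "j < length (bead_face n P i (replicate (card (P ! i)) True))"
  then have j: "j < n" using cube_hom_length[OF cube_hom_bead_face[OF i]] by simp
  show "bead_face n P i (replicate (card (P ! i)) True) ! j = vertex n (prefix_union P (Suc i)) ! j"
    using nth_bead_face[OF i _ j] j count_true_take_vertex_less[OF j, of "P ! i"]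
      count_true_vertex_nth[OF i] prefix_union_Suc[OF i]
    by (auto simp: nth_vertex)
qed (use cube_hom_length[OF cube_hom_bead_face[OF i]] in simp)

lemma face_proj_bead_face:
  assumes "i < length P" "length xs = card (P ! i)"
  shows "face_proj (vertex n (P ! i)) (bead_face n P i xs) = xs"
  using assms mask_select_mask_fill count_true_vertex_nth
  by (simp add: bead_face_def face_map_def face_proj_def)

lemma inj_bead_face: "i < length P \<Longrightarrow> inj_on (bead_face n P i) {xs. length xs = card (P ! i)}"
  by (rule inj_on_inverseI[where g="face_proj (vertex n (P ! i))"]) (simp add: face_proj_bead_face)

lemma bead_face_face_proj:
  assumes i: "i < length P" and w: "in_bead_face n P i w"
  shows "bead_face n P i (face_proj (vertex n (P ! i)) w) = w"
proof -
  have lw: "length w = n" using w by (simp add: in_bead_face_def)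
  have "\<forall>j<n. \<not> vertex n (P ! i) ! j \<longrightarrow> w ! j = vertex n (prefix_union P i) ! j"
    using w prefix_union_Suc[OF i] by (auto simp: in_bead_face_def nth_vertex)
  then have "mask_fill (vertex n (P ! i)) (vertex n (prefix_union P i))
      (mask_select (vertex n (P ! i)) w) = w"
    using mask_fill_mask_select[of w "vertex n (P ! i)" "vertex n (prefix_union P i)"] lw by simp
  then show ?thesis
    using lw length_mask_select count_true_vertex_nth[OF i]
    by (simp add: bead_face_def face_map_def face_proj_def)
qed

lemma in_bead_face_unique:
  assumes "i < i'" "i' < length P" "in_bead_face n P i w" "in_bead_face n P i' w"
  shows "w = vertex n (prefix_union P i')"
proof (rule nth_equalityI)
  fix j assume "j < length w"
  then have j: "j < n" using assms(3) by (simp add: in_bead_face_def)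
  have "prefix_union P (Suc i) \<subseteq> prefix_union P i'" using assms(1) by (simp add: prefix_union_mono)
  then show "w ! j = vertex n (prefix_union P i') ! j"
    using assms(3,4) j by (auto simp: in_bead_face_def nth_vertex)
qed (use assms(3) in \<open>simp add: in_bead_face_def\<close>)

lemma card_ordered_partition_nth_pos: "i < length P \<Longrightarrow> 0 < card (P ! i)"
  using ordered_partition_nth_nonempty[OF P] ordered_partition_nth_finite[OF P]
  by (simp add: card_gt_0_iff)

lemma ordered_partition_nonempty: "1 \<le> n \<Longrightarrow> P \<noteq> []"
  using ordered_partition_prefix_union_length[OF P] by auto

lemma is_neck_map_card: "1 \<le> n \<Longrightarrow> is_neck (map card P)"
  using ordered_partition_nonempty card_ordered_partition_nth_pos
  by (auto simp: is_neck_def in_set_conv_nth Suc_le_eq)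

end

lemma fst_canonical_subneck [simp]: "fst (canonical_subneck n P) = map card P"
  by (simp add: canonical_subneck_def)

lemma snd_canonical_subneck:
  "z \<in> cells (necklace (map card P)) m \<Longrightarrow>
    snd (canonical_subneck n P) m z = ccomp m (bead_face n P (fst z)) (snd z)"
  by (simp add: canonical_subneck_def)

context
  fixes n P assumes P: "P \<in> ordered_partitions n"
begin

lemma bead_face_overlap:
  assumes ab: "a < b" "b < length P"
    and ga: "cube_hom m (card (P ! a)) ga" and gb: "cube_hom m (card (P ! b)) gb"
    and eq: "ccomp m (bead_face n P a) ga = ccomp m (bead_face n P b) gb"
  shows "gb = const_map m (replicate (card (P ! b)) False)"
proof (rule cube_hom_eq_const_map[OF gb])
  fix xs :: "bool list" assume xs: "length xs = m"
  have "bead_face n P a (ga xs) = bead_face n P b (gb xs)"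
    using fun_cong[OF eq, of xs] xs by (simp add: ccomp_def)
  moreover have "in_bead_face n P a (bead_face n P a (ga xs))"
    "in_bead_face n P b (bead_face n P b (gb xs))"
    using bead_face_in_bead_face[OF P] cube_hom_length[OF ga xs] cube_hom_length[OF gb xs] ab
    by auto
  ultimately have "bead_face n P b (gb xs) = bead_face n P b (replicate (card (P ! b)) False)"
    using in_bead_face_unique[OF P ab] bead_face_alpha[OF P ab(2)] by simp
  then show "gb xs = replicate (card (P ! b)) False"
    using inj_bead_face[OF P ab(2)] cube_hom_length[OF gb xs] by (simp add: inj_on_def)
qed

context
  assumes n: "1 \<le> n"
begin

lemma canonical_subneck_hom:
  "cset_hom (necklace (map card P)) (cube n) (snd (canonical_subneck n P))"
  unfolding cset_hom_def
proof (intro conjI allI impI)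
  fix m z assume z: "z \<in> cells (necklace (map card P)) m"
  then show "snd (canonical_subneck n P) m z \<in> cells (cube n) m"
    using cube_hom.hcomp[OF _ cube_hom_bead_face[OF P]] snd_canonical_subneck[OF z]
    by (auto simp: cube_def cells_necklace_iff)
next
  fix m k h z assume "cube_hom m k h \<and> z \<in> cells (necklace (map card P)) k"
  then have h: "cube_hom m k h" and z: "z \<in> cells (necklace (map card P)) k" by auto
  obtain i g where zi: "z = (i, g)" by (cases z)
  have i: "i < length P" using z zi by (simp add: cells_necklace_iff)
  have act: "act (necklace (map card P)) m k h z \<in> cells (necklace (map card P)) m"
    using act_necklace_in_cells[OF is_neck_map_card[OF P n] z h] .
  have rhs: "act (cube n) m k h (snd (canonical_subneck n P) k z) =
      ccomp m (bead_face n P i) (ccomp m g h)"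
    using snd_canonical_subneck[OF z] zi ccomp_assoc[OF h] by (simp add: cube_def)
  show "snd (canonical_subneck n P) m (act (necklace (map card P)) m k h z) =
      act (cube n) m k h (snd (canonical_subneck n P) k z)"
  proof (cases "0 < i \<and> ccomp m g h = const_map m (replicate (card (P ! i)) False)")
    case True
    \<comment> \<open>the \<open>\<alpha>\<close>-vertex of bead \<open>i\<close> is represented by the \<open>\<omega>\<close>-vertex of bead \<open>i - 1\<close>\<close>
    then have "act (necklace (map card P)) m k h z =
        (i - 1, const_map m (replicate (card (P ! (i - 1))) True))"
      using i zi by (simp add: act_necklace nnorm_def)
    moreover have "bead_face n P (i - 1) (replicate (card (P ! (i - 1))) True) =
        bead_face n P i (replicate (card (P ! i)) False)"
      using bead_face_omega[OF P, of "i - 1"] bead_face_alpha[OF P i] True i by simp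
    ultimately show ?thesis
      using snd_canonical_subneck act rhs True by (simp add: ccomp_const_map)
  next
    case False
    then have "act (necklace (map card P)) m k h z = (i, ccomp m g h)"
      using i zi by (auto simp: act_necklace nnorm_def)
    then show ?thesis using snd_canonical_subneck act rhs by simp
  qed
qed (simp add: canonical_subneck_def)

lemma canonical_subneck_mono: "cset_mono (necklace (map card P)) (snd (canonical_subneck n P))"
  unfolding cset_mono_def
proof (intro allI inj_onI)
  fix m z z'
  assume z: "z \<in> cells (necklace (map card P)) m" and z': "z' \<in> cells (necklace (map card P)) m"
    and eq: "snd (canonical_subneck n P) m z = snd (canonical_subneck n P) m z'"
  obtain i g where zi: "z = (i, g)" by (cases z)
  obtain i' g' where zi': "z' = (i', g')" by (cases z')
  have i: "i < length P" "cube_hom m (card (P ! i)) g"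
    "\<not> (0 < i \<and> g = const_map m (replicate (card (P ! i)) False))"
    using z zi by (auto simp: cells_necklace_iff)
  have i': "i' < length P" "cube_hom m (card (P ! i')) g'"
    "\<not> (0 < i' \<and> g' = const_map m (replicate (card (P ! i')) False))"
    using z' zi' by (auto simp: cells_necklace_iff)
  have faces: "ccomp m (bead_face n P i) g = ccomp m (bead_face n P i') g'"
    using eq snd_canonical_subneck[OF z] snd_canonical_subneck[OF z'] zi zi' by simp
  have "i = i'"
    using bead_face_overlap[OF _ i'(1) i(2) i'(2) faces]
      bead_face_overlap[OF _ i(1) i'(2) i(2) faces[symmetric]]
      i(3) i'(3) by (metis gr_zeroI less_nat_zero_code nat_neq_iff)
  moreover have "g = g'"
  proof (rule cube_hom_eqI[OF i(2)])
    show "cube_hom m (card (P ! i)) g'" using i'(2) \<open>i = i'\<close> by simp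
    fix xs :: "bool list" assume xs: "length xs = m"
    have "bead_face n P i (g xs) = bead_face n P i (g' xs)"
      using fun_cong[OF faces, of xs] xs \<open>i = i'\<close> by (simp add: ccomp_def)
    then show "g xs = g' xs"
      using inj_bead_face[OF P i(1)] cube_hom_length[OF i(2) xs] cube_hom_length[OF i'(2) xs]
        \<open>i = i'\<close>
      by (simp add: inj_on_def)
  qed
  ultimately show "z = z'" using zi zi' by simp
qed

lemma canonical_subneck_in_subneck_obj: "canonical_subneck n P \<in> subneck_obj n"
proof -
  have neck: "is_neck (map card P)" by (rule is_neck_map_card[OF P n])
  have len: "0 < length P" "length P - 1 < length P" "Suc (length P - 1) = length P"
    using ordered_partition_nonempty[OF P n] by auto
  have "nstart (map card P) \<in> cells (necklace (map card P)) 0"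
    using nstart_eq_bead_vertex bead_vertex_in_cells[OF neck, of 0] len by simp
  then have "snd (canonical_subneck n P) 0 (nstart (map card P)) =
      const_map 0 (bead_face n P 0 (replicate (card (P ! 0)) False))"
    using len by (simp add: snd_canonical_subneck nstart_def ccomp_const_map)
  also have "\<dots> = alpha n"
    using bead_face_alpha[OF P len(1)] by (simp add: alpha_def vertex_empty)
  finally have start: "snd (canonical_subneck n P) 0 (nstart (map card P)) = alpha n" .
  have "nend (map card P) \<in> cells (necklace (map card P)) 0"
    using nend_eq_bead_vertex[OF neck] bead_vertex_in_cells[OF neck, of "length P - 1"] len by simp
  then have "snd (canonical_subneck n P) 0 (nend (map card P)) =
      const_map 0 (bead_face n P (length P - 1) (replicate (card (P ! (length P - 1))) True))"
    using len by (simp add: snd_canonical_subneck nend_def ccomp_const_map last_conv_nth)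
  also have "\<dots> = omega n"
    using bead_face_omega[OF P len(2)] len(3) ordered_partition_prefix_union_length[OF P]
      vertex_full[of n]
    by (simp add: omega_def)
  finally have "snd (canonical_subneck n P) 0 (nend (map card P)) = omega n" .
  then show ?thesis
    unfolding subneck_obj_def using neck canonical_subneck_hom canonical_subneck_mono start
    by (simp add: canonical_subneck_def)
qed

end

end

section \<open>Sub-necklaces of the cube\<close>

definition bead_map :: "(nat \<Rightarrow> nat \<times> cmap \<Rightarrow> cmap) \<Rightarrow> nat list \<Rightarrow> nat \<Rightarrow> cmap" where
  "bead_map \<phi> ns i = \<phi> (ns ! i) (i, cid (ns ! i))"

definition neck_partition :: "nat \<Rightarrow> subneck \<Rightarrow> nat set list" where
  "neck_partition n x = (case x of (ns, \<phi>) \<Rightarrow>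
     map (\<lambda>i. Suc ` cube_directions (ns ! i) n (bead_map \<phi> ns i)) [0..<length ns])"

locale subneck_of_cube =
  fixes n :: nat and ns :: "nat list" and \<phi> :: "nat \<Rightarrow> nat \<times> cmap \<Rightarrow> cmap"
  assumes obj: "(ns, \<phi>) \<in> subneck_obj n"
begin

lemma is_neck: "is_neck ns"
  using obj by (simp add: subneck_obj_def)

lemma hom: "cset_hom (necklace ns) (cube n) \<phi>"
  using obj by (simp add: subneck_obj_def)

lemma mono: "cset_mono (necklace ns) \<phi>"
  using obj by (simp add: subneck_obj_def)

lemma ns_nonempty: "ns \<noteq> []"
  using is_neck by (simp add: is_neck_def)

lemma cube_hom_bead_map: "i < length ns \<Longrightarrow> cube_hom (ns ! i) n (bead_map \<phi> ns i)"
  using hom bead_in_cells[OF is_neck] unfolding cset_hom_def bead_map_def by (auto simp: cube_def)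

lemma naturality:
  "cube_hom m k h \<Longrightarrow> z \<in> cells (necklace ns) k \<Longrightarrow> \<phi> m (act (necklace ns) m k h z) = ccomp m (\<phi> k z) h"
proof -
  assume "cube_hom m k h" "z \<in> cells (necklace ns) k"
  then have "\<phi> m (act (necklace ns) m k h z) = act (cube n) m k h (\<phi> k z)"
    using hom unfolding cset_hom_def by blast
  then show ?thesis by (simp add: cube_def)
qed

lemma phi_cell: "(i, g) \<in> cells (necklace ns) m \<Longrightarrow> \<phi> m (i, g) = ccomp m (bead_map \<phi> ns i) g"
  using naturality[of m "ns ! i" g, OF _ bead_in_cells[OF is_neck]] act_necklace_bead
  by (simp add: cells_necklace_iff bead_map_def)

lemma phi_undefined: "z \<notin> cells (necklace ns) m \<Longrightarrow> \<phi> m z = undefined"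
  using hom unfolding cset_hom_def by blast

lemma phi_bead_vertex:
  "i < length ns \<Longrightarrow> length w = ns ! i \<Longrightarrow> \<phi> 0 (bead_vertex ns i w) = const_map 0 (bead_map \<phi> ns i w)"
  using naturality[OF cube_hom_const_map bead_in_cells[OF is_neck]]
  by (simp add: bead_vertex_def bead_map_def ccomp_const_map)

lemma inj_bead_map: "i < length ns \<Longrightarrow> inj_on (bead_map \<phi> ns i) {xs. length xs = ns ! i}"
proof (rule inj_onI)
  fix w w' assume i: "i < length ns" and w: "w \<in> {xs. length xs = ns ! i}"
    "w' \<in> {xs. length xs = ns ! i}"
    and eq: "bead_map \<phi> ns i w = bead_map \<phi> ns i w'"
  have "\<phi> 0 (bead_vertex ns i w) = \<phi> 0 (bead_vertex ns i w')"
    using phi_bead_vertex[OF i] w eq by simp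
  then have "bead_vertex ns i w = bead_vertex ns i w'"
    using mono bead_vertex_in_cells[OF is_neck i] w unfolding cset_mono_def inj_on_def by blast
  then show "w = w'" using bead_vertex_inject w by blast
qed

lemma bead_map_first_alpha: "bead_map \<phi> ns 0 (replicate (ns ! 0) False) = replicate n False"
  using obj phi_bead_vertex[of 0 "replicate (ns ! 0) False"] ns_nonempty
    nstart_eq_bead_vertex[of ns]
  by (simp add: subneck_obj_def alpha_def const_map_inject)

lemma bead_map_last_omega:
  "bead_map \<phi> ns (length ns - 1) (replicate (ns ! (length ns - 1)) True) = replicate n True"
  using obj phi_bead_vertex[of "length ns - 1" "replicate (ns ! (length ns - 1)) True"] ns_nonempty
    nend_eq_bead_vertex[OF is_neck]
  by (simp add: subneck_obj_def omega_def const_map_inject)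

lemma bead_map_alpha_eq_prev_omega:
  assumes "0 < i" "i < length ns"
  shows "bead_map \<phi> ns i (replicate (ns ! i) False) =
    bead_map \<phi> ns (i - 1) (replicate (ns ! (i - 1)) True)"
  using phi_bead_vertex[of i "replicate (ns ! i) False"]
    phi_bead_vertex[of "i - 1" "replicate (ns ! (i - 1)) True"]
    bead_vertex_alpha[OF is_neck assms] assms
  by (simp add: const_map_inject)

abbreviation partition :: "nat set list" where
  "partition \<equiv> neck_partition n (ns, \<phi>)"

lemma length_partition: "length partition = length ns"
  by (simp add: neck_partition_def)

lemma partition_nth:
  "i < length ns \<Longrightarrow> partition ! i = Suc ` cube_directions (ns ! i) n (bead_map \<phi> ns i)"
  by (simp add: neck_partition_def)

text \<open>Since consecutive beads are glued \<open>\<omega>\<close> to \<open>\<alpha>\<close>, the images of their ends are the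
  vertices of the prefix unions of the partition.\<close>

lemma vertex_prefix_union_partition:
  assumes "i < length ns"
  shows "vertex n (prefix_union partition i) = bead_map \<phi> ns i (replicate (ns ! i) False)
    \<and> vertex n (prefix_union partition (Suc i)) = bead_map \<phi> ns i (replicate (ns ! i) True)"
proof -
  have step: "vertex n (prefix_union partition (Suc i)) = bead_map \<phi> ns i (replicate (ns ! i) True)"
    if i: "i < length ns" and alpha:
      "vertex n (prefix_union partition i) = bead_map \<phi> ns i (replicate (ns ! i) False)"
    for i
  proof -
    let ?f = "bead_map \<phi> ns i"
      and ?a = "replicate (ns ! i) False" and ?b = "replicate (ns ! i) True"
    have "vertex n (prefix_union partition i \<union> Suc ` {j. j < n \<and> ?f ?b ! j \<and> \<not> ?f ?a ! j}) = ?f ?b"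
      using cube_hom_length[OF cube_hom_bead_map[OF i]] alpha
        join_map_alpha_le_omega[OF cube_hom_join_map[OF cube_hom_bead_map[OF i]]]
      by (intro vertex_extend) auto
    then show ?thesis
      using prefix_union_Suc[of i partition] partition_nth[OF i] i length_partition
      by (simp add: cube_directions_def)
  qed
  show ?thesis
    using assms
  proof (induction i)
    case 0
    then show ?case using step[of 0] bead_map_first_alpha vertex_empty by simp
  next
    case (Suc i)
    then show ?case using step[of "Suc i"] bead_map_alpha_eq_prev_omega[of "Suc i"] by simp
  qed
qed

lemma card_partition_nth: "i < length ns \<Longrightarrow> card (partition ! i) = ns ! i"
  using partition_nth card_cube_directions[OF cube_hom_join_map[OF cube_hom_bead_map] inj_bead_map]
  by (simp add: card_image)

lemma partition_nth_subset: "i < length ns \<Longrightarrow> partition ! i \<subseteq> {1..n}"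
  using partition_nth by (auto simp: cube_directions_def)

lemma prefix_union_partition_subset: "prefix_union partition i \<subseteq> {1..n}"
  using partition_nth_subset length_partition by (force simp: prefix_union_def in_set_conv_nth)

lemma partition_nth_disjoint:
  assumes i: "i < length ns"
  shows "partition ! i \<inter> prefix_union partition i = {}"
proof -
  have "Suc j \<notin> prefix_union partition i"
    if "j \<in> cube_directions (ns ! i) n (bead_map \<phi> ns i)" for j
  proof -
    from that have "j < n" "\<not> bead_map \<phi> ns i (replicate (ns ! i) False) ! j"
      by (simp_all add: cube_directions_def)
    then show ?thesis
      using nth_vertex[OF \<open>j < n\<close>, of "prefix_union partition i"]
        vertex_prefix_union_partition[OF i] by simp
  qed
  then show ?thesis using partition_nth[OF i] by auto
qed

lemma prefix_union_partition_length: "prefix_union partition (length partition) = {1..n}"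
proof -
  have "vertex n (prefix_union partition (length partition)) = replicate n True"
    using vertex_prefix_union_partition[of "length ns - 1"] bead_map_last_omega ns_nonempty
      length_partition
    by simp
  then show ?thesis
    by (intro vertex_inject[OF prefix_union_partition_subset order_refl])
      (use vertex_full[of n] in simp)
qed

lemma partition_in_ordered_partitions: "partition \<in> ordered_partitions n"
  unfolding ordered_partitions_iff
  using card_partition_nth is_neck_nth_pos[OF is_neck] partition_nth_disjoint
    prefix_union_partition_length
    length_partition
  by (metis card.empty less_not_refl)

lemma map_card_partition: "map card partition = ns"
  by (rule nth_equalityI) (auto simp: length_partition card_partition_nth)

lemma bead_map_eq_bead_face:
  assumes i: "i < length ns"
  shows "bead_map \<phi> ns i = bead_face n partition i"
proof -
  note P = partition_in_ordered_partitions
  have iP: "i < length partition" and k: "card (partition ! i) = ns ! i"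
    using i length_partition card_partition_nth by auto
  have face: "cube_hom (ns ! i) n (bead_face n partition i)"
    "inj_on (bead_face n partition i) {xs. length xs = ns ! i}"
    using cube_hom_bead_face[OF P iP] inj_bead_face[OF P iP] k by simp_all
  have "bead_map \<phi> ns i (replicate (ns ! i) False) =
      bead_face n partition i (replicate (ns ! i) False)"
    "bead_map \<phi> ns i (replicate (ns ! i) True) = bead_face n partition i (replicate (ns ! i) True)"
    using vertex_prefix_union_partition[OF i] bead_face_alpha[OF P iP] bead_face_omega[OF P iP]
    unfolding k by simp_all
  then show ?thesis
    using inj_join_map_eqI[OF cube_hom_join_map[OF cube_hom_bead_map[OF i]] inj_bead_map[OF i]
        cube_hom_join_map[OF face(1)] face(2)]
    by (intro cube_hom_eqI[OF cube_hom_bead_map[OF i] face(1)])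
qed

lemma canonical_subneck_partition: "canonical_subneck n partition = (ns, \<phi>)"
proof -
  have "(\<lambda>m z. if z \<in> cells (necklace ns) m
      then ccomp m (bead_face n partition (fst z)) (snd z) else undefined) = \<phi>"
  proof (rule ext, rule ext)
    fix m z
    show "(if z \<in> cells (necklace ns) m
        then ccomp m (bead_face n partition (fst z)) (snd z) else undefined) = \<phi> m z"
      using phi_cell[of "fst z" "snd z" m] phi_undefined bead_map_eq_bead_face
      by (cases z) (auto simp: cells_necklace_iff)
  qed
  then show ?thesis unfolding canonical_subneck_def map_card_partition by simp
qed

end

lemma neck_partition_canonical_subneck:
  assumes P: "P \<in> ordered_partitions n" and n: "1 \<le> n"
  shows "neck_partition n (canonical_subneck n P) = P"
proof (rule nth_equalityI)
  fix i assume "i < length (neck_partition n (canonical_subneck n P))"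
  then have i: "i < length P" by (simp add: neck_partition_def canonical_subneck_def)
  have cell: "(i, cid (card (P ! i))) \<in> cells (necklace (map card P)) (card (P ! i))"
    using bead_in_cells[OF is_neck_map_card[OF P n], of i] i by simp
  have "bead_map (snd (canonical_subneck n P)) (map card P) i = bead_face n P i"
    using snd_canonical_subneck[OF cell] ccomp_cid_right[OF cube_hom_bead_face[OF P i]] i
    by (simp add: bead_map_def)
  moreover have "cube_directions (card (P ! i)) n (bead_face n P i) = {j. j < n \<and> Suc j \<in> P ! i}"
    using bead_face_alpha[OF P i] bead_face_omega[OF P i] ordered_partition_nth_eq[OF P i]
      prefix_union_mono[of i "Suc i" P]
    by (auto simp: cube_directions_def nth_vertex)
  ultimately show "neck_partition n (canonical_subneck n P) ! i = P ! i"
    using i image_Suc_shift[OF ordered_partition_nth_subset[OF P i]]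
    by (simp add: neck_partition_def canonical_subneck_def)
qed (simp add: neck_partition_def canonical_subneck_def)

lemma neck_partition_in_ordered_partitions:
  "x \<in> subneck_obj n \<Longrightarrow> neck_partition n x \<in> ordered_partitions n"
  by (cases x) (simp add: subneck_of_cube.partition_in_ordered_partitions subneck_of_cube_def)

lemma canonical_subneck_neck_partition:
  "x \<in> subneck_obj n \<Longrightarrow> canonical_subneck n (neck_partition n x) = x"
  by (cases x) (simp add: subneck_of_cube.canonical_subneck_partition subneck_of_cube_def)

lemma neck_partition_bij:
  assumes n: "1 \<le> n"
  shows "bij_betw (neck_partition n) (subneck_obj n) (ordered_partitions n)"
  by (rule bij_betw_byWitness[where f'="canonical_subneck n"])
    (use canonical_subneck_neck_partition neck_partition_canonical_subneck n
      neck_partition_in_ordered_partitions canonical_subneck_in_subneck_obj in auto)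

section \<open>The poset of sub-necklaces\<close>

definition subneck_image :: "subneck \<Rightarrow> nat \<Rightarrow> cmap set" where
  "subneck_image x m = snd x m ` cells (necklace (fst x)) m"

lemma subneck_le_image_subset:
  assumes "subneck_le n (ns, \<phi>) (ns', \<psi>)"
  shows "subneck_image (ns, \<phi>) m \<subseteq> subneck_image (ns', \<psi>) m"
proof
  fix h assume "h \<in> subneck_image (ns, \<phi>) m"
  then obtain z where z: "z \<in> cells (necklace ns) m" "h = \<phi> m z" by (auto simp: subneck_image_def)
  obtain g where "subneck_hom n (ns, \<phi>) (ns', \<psi>) g" using assms by (auto simp: subneck_le_def)
  then have "cset_hom (necklace ns) (necklace ns') g"
    "\<forall>m z. z \<in> cells (necklace ns) m \<longrightarrow> \<psi> m (g m z) = \<phi> m z"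
    by (simp_all add: subneck_hom_def)
  then have "g m z \<in> cells (necklace ns') m" "\<psi> m (g m z) = \<phi> m z"
    using z unfolding cset_hom_def by blast+
  then show "h \<in> subneck_image (ns', \<psi>) m" using z by (force simp: subneck_image_def)
qed

definition factor_map ::
  "nat list \<Rightarrow> (nat \<Rightarrow> nat \<times> cmap \<Rightarrow> cmap) \<Rightarrow>
    nat list \<Rightarrow> (nat \<Rightarrow> nat \<times> cmap \<Rightarrow> cmap) \<Rightarrow>
    nat \<Rightarrow> nat \<times> cmap \<Rightarrow> nat \<times> cmap"
  where "factor_map ns \<phi> ns' \<psi> m z =
    (if z \<in> cells (necklace ns) m
     then inv_into (cells (necklace ns') m) (\<psi> m) (\<phi> m z) else undefined)"

context
  fixes n ns \<phi> ns' \<psi>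
  assumes x: "(ns, \<phi>) \<in> subneck_obj n" and y: "(ns', \<psi>) \<in> subneck_obj n"
    and sub: "\<And>m. subneck_image (ns, \<phi>) m \<subseteq> subneck_image (ns', \<psi>) m"
begin

interpretation X: subneck_of_cube n ns \<phi> by (rule subneck_of_cube.intro[OF x])
interpretation Y: subneck_of_cube n ns' \<psi> by (rule subneck_of_cube.intro[OF y])

lemma factor_map:
  assumes "z \<in> cells (necklace ns) m"
  shows "factor_map ns \<phi> ns' \<psi> m z \<in> cells (necklace ns') m"
    "\<psi> m (factor_map ns \<phi> ns' \<psi> m z) = \<phi> m z"
proof -
  have "\<phi> m z \<in> \<psi> m ` cells (necklace ns') m"
    using sub[of m] assms by (auto simp: subneck_image_def)
  then show "factor_map ns \<phi> ns' \<psi> m z \<in> cells (necklace ns') m"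
    "\<psi> m (factor_map ns \<phi> ns' \<psi> m z) = \<phi> m z"
    using assms by (simp_all add: factor_map_def inv_into_into f_inv_into_f)
qed

lemma factor_map_unique:
  "z \<in> cells (necklace ns') m \<Longrightarrow> w \<in> cells (necklace ns') m \<Longrightarrow> \<psi> m z = \<psi> m w \<Longrightarrow> z = w"
  using Y.mono by (auto simp: cset_mono_def inj_on_def)

lemma cset_hom_factor_map: "cset_hom (necklace ns) (necklace ns') (factor_map ns \<phi> ns' \<psi>)"
  unfolding cset_hom_def
proof (intro conjI allI impI)
  fix m k h z assume "cube_hom m k h \<and> z \<in> cells (necklace ns) k"
  then have h: "cube_hom m k h" and z: "z \<in> cells (necklace ns) k" by auto
  let ?g = "factor_map ns \<phi> ns' \<psi>"
  have "\<psi> m (?g m (act (necklace ns) m k h z)) = \<phi> m (act (necklace ns) m k h z)"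
    using factor_map(2)[OF act_necklace_in_cells[OF X.is_neck z h]] .
  also have "\<dots> = ccomp m (\<psi> k (?g k z)) h"
    using X.naturality[OF h z] factor_map(2)[OF z] by simp
  also have "\<dots> = \<psi> m (act (necklace ns') m k h (?g k z))"
    using Y.naturality[OF h factor_map(1)[OF z]] by simp
  finally show "?g m (act (necklace ns) m k h z) = act (necklace ns') m k h (?g k z)"
    using factor_map_unique factor_map(1)[OF act_necklace_in_cells[OF X.is_neck z h]]
      act_necklace_in_cells[OF Y.is_neck factor_map(1)[OF z] h] by blast
qed (blast intro: factor_map(1), simp add: factor_map_def)

lemma image_subset_subneck_le: "subneck_le n (ns, \<phi>) (ns', \<psi>)"
  unfolding subneck_le_def subneck_hom_def prod.case
proof (intro exI conjI allI impI)
  let ?g = "factor_map ns \<phi> ns' \<psi>"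
  show "cset_hom (necklace ns) (necklace ns') ?g" by (rule cset_hom_factor_map)
  show "cset_mono (necklace ns) ?g"
    unfolding cset_mono_def
  proof (intro allI inj_onI)
    fix m z z' assume "z \<in> cells (necklace ns) m" "z' \<in> cells (necklace ns) m" "?g m z = ?g m z'"
    then show "z = z'"
      using factor_map(2) X.mono by (metis cset_mono_def inj_onD)
  qed
  have ends: "\<phi> 0 (nstart ns) = \<psi> 0 (nstart ns')" "\<phi> 0 (nend ns) = \<psi> 0 (nend ns')"
    using x y by (simp_all add: subneck_obj_def)
  have "nstart ns \<in> cells (necklace ns) 0" "nstart ns' \<in> cells (necklace ns') 0"
    using nstart_eq_bead_vertex bead_vertex_in_cells X.is_neck Y.is_neck X.ns_nonempty Y.ns_nonempty
    by auto
  then show "?g 0 (nstart ns) = nstart ns'"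
    using factor_map_unique factor_map ends(1) by metis
  have "nend ns \<in> cells (necklace ns) 0" "nend ns' \<in> cells (necklace ns') 0"
    using nend_eq_bead_vertex bead_vertex_in_cells X.is_neck Y.is_neck X.ns_nonempty Y.ns_nonempty
    by auto
  then show "?g 0 (nend ns) = nend ns'"
    using factor_map_unique factor_map ends(2) by metis
  fix m z assume "z \<in> cells (necklace ns) m"
  then show "\<psi> m (?g m z) = \<phi> m z" by (rule factor_map(2))
qed

end

lemma subneck_le_iff_image_subset:
  assumes "x \<in> subneck_obj n" "y \<in> subneck_obj n"
  shows "subneck_le n x y \<longleftrightarrow> (\<forall>m. subneck_image x m \<subseteq> subneck_image y m)"
proof -
  obtain ns \<phi> ns' \<psi> where xy: "x = (ns, \<phi>)" "y = (ns', \<psi>)" by (cases x, cases y)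
  show ?thesis
    using assms image_subset_subneck_le[of ns \<phi> n ns' \<psi>] subneck_le_image_subset[of n ns \<phi> ns' \<psi>]
    unfolding xy by blast
qed

lemma in_bead_face_vertexD:
  assumes "in_bead_face n Q j (vertex n X)" "X \<subseteq> {1..n}" "prefix_union Q j \<subseteq> {1..n}"
  shows "prefix_union Q j \<subseteq> X \<and> X \<subseteq> prefix_union Q (Suc j)"
proof -
  have "Suc k \<in> prefix_union Q j \<longrightarrow> Suc k \<in> X" "Suc k \<in> X \<longrightarrow> Suc k \<in> prefix_union Q (Suc j)"
    if "k < n" for k
    using assms(1) that by (auto simp: in_bead_face_def nth_vertex)
  then show ?thesis
    using assms(2,3) by (metis subsetI subset_atLeastAtMost_SucE)
qed

context
  fixes n Q assumes Q: "Q \<in> ordered_partitions n" and n: "1 \<le> n"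
begin

lemma bead_face_in_canonical_image:
  assumes "(j, g) \<in> cells (necklace (map card Q)) m"
  shows "ccomp m (bead_face n Q j) g \<in> subneck_image (canonical_subneck n Q) m"
proof -
  have "snd (canonical_subneck n Q) m (j, g) = ccomp m (bead_face n Q j) g"
    using snd_canonical_subneck[OF assms] by simp
  then show ?thesis
    unfolding subneck_image_def fst_canonical_subneck using assms by (metis rev_image_eqI)
qed

lemma in_canonical_image:
  assumes j: "j < length Q" and h: "cube_hom m n h"
    and face: "\<And>xs. length xs = m \<Longrightarrow> in_bead_face n Q j (h xs)"
  shows "h \<in> subneck_image (canonical_subneck n Q) m"
proof -
  define g where "g = ccomp m (face_proj (vertex n (Q ! j))) h"
  have g: "cube_hom m (card (Q ! j)) g"
    unfolding g_def using cube_hom.hcomp[OF h cube_hom_face_proj_vertex[OF Q j]] .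
  have h_eq: "ccomp m (bead_face n Q j) g = h"
  proof (rule cube_hom_eqI[OF cube_hom.hcomp[OF g cube_hom_bead_face[OF Q j]] h])
    fix xs :: "bool list" assume "length xs = m"
    then show "ccomp m (bead_face n Q j) g xs = h xs"
      using bead_face_face_proj[OF Q j face] by (simp add: g_def ccomp_def)
  qed
  show ?thesis
  proof (cases "(j, g) \<in> cells (necklace (map card Q)) m")
    case True
    then show ?thesis using bead_face_in_canonical_image[OF True] h_eq by simp
  next
    case False
    \<comment> \<open>\<open>h\<close> is the \<open>\<alpha>\<close>-vertex of bead \<open>j\<close>, stored as the \<open>\<omega>\<close>-vertex of bead \<open>j - 1\<close>\<close>
    then have j0: "0 < j" and g_alpha: "g = const_map m (replicate (card (Q ! j)) False)"
      using j g by (auto simp: cells_necklace_iff)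
    have j1: "j - 1 < length Q" "Suc (j - 1) = j" using j j0 by auto
    let ?c = "const_map m (replicate (card (Q ! (j - 1))) True)"
    have cell: "(j - 1, ?c) \<in> cells (necklace (map card Q)) m"
      using j1 const_map_True_neq_False[OF card_ordered_partition_nth_pos[OF Q j1(1)]]
        cube_hom_const_map[of "replicate (card (Q ! (j - 1))) True"]
      by (simp add: cells_necklace_iff)
    have "ccomp m (bead_face n Q (j - 1)) ?c = h"
      using h_eq g_alpha bead_face_alpha[OF Q j] bead_face_omega[OF Q j1(1)] j1(2)
      by (simp add: ccomp_const_map)
    then show ?thesis using bead_face_in_canonical_image[OF cell] by simp
  qed
qed

end

lemma canonical_image_subset_face_refines:
  assumes P: "P \<in> ordered_partitions n" and Q: "Q \<in> ordered_partitions n" and n: "1 \<le> n"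
    and sub: "\<And>m. subneck_image (canonical_subneck n P) m \<subseteq> subneck_image (canonical_subneck n Q) m"
  shows "face_refines P Q"
  unfolding face_refines_def
proof (intro allI impI)
  fix i assume i: "i < length P"
  let ?k = "card (P ! i)"
  have "ccomp ?k (bead_face n P i) (cid ?k) \<in> subneck_image (canonical_subneck n P) ?k"
    using bead_face_in_canonical_image[OF P n] bead_in_cells[OF is_neck_map_card[OF P n], of i] i
    by simp
  then have "bead_face n P i \<in> subneck_image (canonical_subneck n Q) ?k"
    using sub ccomp_cid_right[OF cube_hom_bead_face[OF P i]] by auto
  then obtain z where z: "z \<in> cells (necklace (map card Q)) ?k"
    and eq: "bead_face n P i = ccomp ?k (bead_face n Q (fst z)) (snd z)"
    using snd_canonical_subneck by (auto simp: subneck_image_def)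
  obtain j g where zjg: "z = (j, g)" by (cases z)
  have j: "j < length Q" and g: "cube_hom ?k (card (Q ! j)) g"
    using z zjg by (auto simp: cells_necklace_iff)
  have face: "in_bead_face n Q j (bead_face n P i xs)" if "length xs = ?k" for xs
    using eq zjg bead_face_in_bead_face[OF Q j cube_hom_length[OF g that]] that
    by (simp add: ccomp_def)
  have "in_bead_face n Q j (vertex n (prefix_union P i))"
    using face[of "replicate ?k False"] bead_face_alpha[OF P i] by simp
  then have "prefix_union Q j \<subseteq> prefix_union P i"
    using in_bead_face_vertexD ordered_partition_prefix_union_subset[OF P]
      ordered_partition_prefix_union_subset[OF Q]
    by blast
  moreover have "in_bead_face n Q j (vertex n (prefix_union P (Suc i)))"
    using face[of "replicate ?k True"] bead_face_omega[OF P i] by simp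
  then have "prefix_union P (Suc i) \<subseteq> prefix_union Q (Suc j)"
    using in_bead_face_vertexD ordered_partition_prefix_union_subset[OF P]
      ordered_partition_prefix_union_subset[OF Q]
    by blast
  ultimately show "\<exists>j<length Q. prefix_union Q j \<subseteq> prefix_union P i
      \<and> prefix_union P (Suc i) \<subseteq> prefix_union Q (Suc j)"
    using j by blast
qed

lemma face_refines_canonical_image_subset:
  assumes P: "P \<in> ordered_partitions n" and Q: "Q \<in> ordered_partitions n" and n: "1 \<le> n"
    and fr: "face_refines P Q"
  shows "subneck_image (canonical_subneck n P) m \<subseteq> subneck_image (canonical_subneck n Q) m"
proof
  fix h assume "h \<in> subneck_image (canonical_subneck n P) m"
  then obtain z where z: "z \<in> cells (necklace (map card P)) m"
    and h_z: "h = ccomp m (bead_face n P (fst z)) (snd z)"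
    using snd_canonical_subneck by (auto simp: subneck_image_def)
  obtain i g where zig: "z = (i, g)" by (cases z)
  have h: "h = ccomp m (bead_face n P i) g" using h_z zig by simp
  have i: "i < length P" and g: "cube_hom m (card (P ! i)) g"
    using z zig by (auto simp: cells_necklace_iff)
  obtain j where j: "j < length Q" "prefix_union Q j \<subseteq> prefix_union P i"
    "prefix_union P (Suc i) \<subseteq> prefix_union Q (Suc j)"
    using fr i unfolding face_refines_def by blast
  have "in_bead_face n Q j (h xs)" if "length xs = m" for xs
    using bead_face_in_bead_face[OF P i cube_hom_length[OF g that]] h j(2,3) that
    unfolding in_bead_face_def by (auto simp: ccomp_def)
  then show "h \<in> subneck_image (canonical_subneck n Q) m"
    using in_canonical_image[OF Q n j(1)] cube_hom.hcomp[OF g cube_hom_bead_face[OF P i]] h by blast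
qed

lemma subneck_le_iff_refine_le:
  assumes n: "1 \<le> n" and x: "x \<in> subneck_obj n" and y: "y \<in> subneck_obj n"
  shows "subneck_le n x y \<longleftrightarrow> refine_le (neck_partition n x) (neck_partition n y)"
proof -
  have P: "neck_partition n x \<in> ordered_partitions n" "neck_partition n y \<in> ordered_partitions n"
    using neck_partition_in_ordered_partitions x y by auto
  have "canonical_subneck n (neck_partition n x) = x" "canonical_subneck n (neck_partition n y) = y"
    using canonical_subneck_neck_partition x y by auto
  then have "subneck_le n x y \<longleftrightarrow> face_refines (neck_partition n x) (neck_partition n y)"
    using subneck_le_iff_image_subset[OF x y] canonical_image_subset_face_refines[OF P n]
      face_refines_canonical_image_subset[OF P n] by metis
  then show ?thesis using refine_le_iff_face_refines[OF P] by simp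
qed

lemma subneck_hom_unique:
  assumes y: "y \<in> subneck_obj n" and g: "subneck_hom n x y g" and g': "subneck_hom n x y g'"
  shows "g = g'"
proof -
  obtain ns \<phi> ns' \<psi> where xy: "x = (ns, \<phi>)" "y = (ns', \<psi>)" by (cases x, cases y)
  have G: "cset_hom (necklace ns) (necklace ns') g"
    "\<forall>m z. z \<in> cells (necklace ns) m \<longrightarrow> \<psi> m (g m z) = \<phi> m z"
    and G': "cset_hom (necklace ns) (necklace ns') g'"
      "\<forall>m z. z \<in> cells (necklace ns) m \<longrightarrow> \<psi> m (g' m z) = \<phi> m z"
    using g g' xy by (simp_all add: subneck_hom_def)
  have inj: "inj_on (\<psi> m) (cells (necklace ns') m)" for m
    using y xy by (simp add: subneck_obj_def cset_mono_def)
  show ?thesis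
  proof (rule ext, rule ext)
    fix m z
    show "g m z = g' m z"
    proof (cases "z \<in> cells (necklace ns) m")
      case True
      then have "g m z \<in> cells (necklace ns') m" "g' m z \<in> cells (necklace ns') m"
        using G(1) G'(1) unfolding cset_hom_def by blast+
      moreover have "\<psi> m (g m z) = \<psi> m (g' m z)"
        using G(2)[rule_format, OF True] G'(2)[rule_format, OF True] by simp
      ultimately show ?thesis using inj by (auto simp: inj_on_def)
    next
      case False
      then have "g m z = undefined" "g' m z = undefined"
        using G(1) G'(1) unfolding cset_hom_def by blast+
      then show ?thesis by simp
    qed
  qed
qed

context
  fixes n :: nat assumes n: "1 \<le> n"
begin

lemma subneck_one_block_greatest:
  "\<exists>t\<in>subneck_obj n. neck_partition n t = [{1..n}] \<and> (\<forall>x\<in>subneck_obj n. subneck_le n x t)"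
proof -
  have one_block: "[{1..n}] \<in> ordered_partitions n" using n by (auto simp: ordered_partitions_def)
  show ?thesis
    using canonical_subneck_in_subneck_obj[OF one_block n]
      neck_partition_canonical_subneck[OF one_block n]
      subneck_le_iff_refine_le[OF n] refine_le_one_block[OF neck_partition_in_ordered_partitions n]
    by metis
qed

lemma bij_betw_permutations_minimal_subneck:
  "bij_betw (\<lambda>\<sigma>. inv_into (subneck_obj n) (neck_partition n) (map (\<lambda>i. {\<sigma> i}) [1..<Suc n]))
     {\<sigma>. \<sigma> permutes {1..n}}
     {x\<in>subneck_obj n. \<forall>y\<in>subneck_obj n. subneck_le n y x \<longrightarrow> y = x}"
proof -
  have "neck_partition n ` {x\<in>subneck_obj n. \<forall>y\<in>subneck_obj n. subneck_le n y x \<longrightarrow> y = x}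
      = {P\<in>ordered_partitions n. \<forall>Q\<in>ordered_partitions n. refine_le Q P \<longrightarrow> Q = P}"
    by (rule order_iso_minimal[where le = "subneck_le n" and le' = refine_le,
          OF neck_partition_bij[OF n] subneck_le_iff_refine_le[OF n]])
  also have "\<dots> = {P \<in> ordered_partitions n. \<forall>A\<in>set P. is_singleton A}"
    using refine_le_minimal_iff by blast
  finally have "bij_betw (inv_into (subneck_obj n) (neck_partition n))
      {P \<in> ordered_partitions n. \<forall>A\<in>set P. is_singleton A}
      {x\<in>subneck_obj n. \<forall>y\<in>subneck_obj n. subneck_le n y x \<longrightarrow> y = x}"
    by (intro bij_betw_inv_into_subset[OF neck_partition_bij[OF n]]) auto
  from bij_betw_trans[OF bij_betw_singleton_partitions this] show ?thesis
    by (simp add: comp_def)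
qed

lemma subneck_lub:
  assumes "S \<subseteq> subneck_obj n" "S \<noteq> {}"
  shows "\<exists>u\<in>subneck_obj n. (\<forall>s\<in>S. subneck_le n s u)
    \<and> (\<forall>v\<in>subneck_obj n. (\<forall>s\<in>S. subneck_le n s v) \<longrightarrow> subneck_le n u v)"
  by (rule order_iso_lub[where le = "subneck_le n" and le' = refine_le,
        OF neck_partition_bij[OF n] subneck_le_iff_refine_le[OF n] refine_le_lub assms])

end

theorem propositionB1:
  fixes n :: nat
  assumes "1 \<le> n"
  shows
    \<comment> \<open>SubNeck is thin ...\<close>
    "(\<forall>x\<in>subneck_obj n. \<forall>y\<in>subneck_obj n. \<forall>g g'.
        subneck_hom n x y g \<and> subneck_hom n x y g' \<longrightarrow> g = g')
    \<comment> \<open>... and antisymmetric, i.e. a poset\<close>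
   \<and> (\<forall>x\<in>subneck_obj n. \<forall>y\<in>subneck_obj n.
        subneck_le n x y \<and> subneck_le n y x \<longrightarrow> x = y)
    \<comment> \<open>poset isomorphism with ordered partitions under inverse refinement\<close>
   \<and> (\<exists>\<Phi>. bij_betw \<Phi> (subneck_obj n) (ordered_partitions n)
        \<and> (\<forall>x\<in>subneck_obj n. \<forall>y\<in>subneck_obj n.
              subneck_le n x y \<longleftrightarrow> refine_le (\<Phi> x) (\<Phi> y))
        \<and> (\<exists>t\<in>subneck_obj n. \<Phi> t = [{1..n}] \<and> (\<forall>x\<in>subneck_obj n. subneck_le n x t))
        \<and> bij_betw (\<lambda>\<sigma>. inv_into (subneck_obj n) \<Phi> (map (\<lambda>i. {\<sigma> i}) [1..<Suc n]))
             {\<sigma>. \<sigma> permutes {1..n}}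
             {x\<in>subneck_obj n. \<forall>y\<in>subneck_obj n. subneck_le n y x \<longrightarrow> y = x})
    \<comment> \<open>all (nonempty) least upper bounds exist\<close>
   \<and> (\<forall>S. S \<subseteq> subneck_obj n \<and> S \<noteq> {} \<longrightarrow>
        (\<exists>u\<in>subneck_obj n. (\<forall>s\<in>S. subneck_le n s u)
           \<and> (\<forall>v\<in>subneck_obj n. (\<forall>s\<in>S. subneck_le n s v) \<longrightarrow> subneck_le n u v)))"
proof -
  have "\<forall>x\<in>subneck_obj n. \<forall>y\<in>subneck_obj n. subneck_le n x y \<and> subneck_le n y x \<longrightarrow> x = y"
    by (rule order_iso_antisym[where le = "subneck_le n" and le' = refine_le,
          OF neck_partition_bij[OF assms] subneck_le_iff_refine_le[OF assms] refine_le_antisym])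
  then show ?thesis
    using subneck_hom_unique neck_partition_bij[OF assms] subneck_le_iff_refine_le[OF assms]
      subneck_one_block_greatest[OF assms] bij_betw_permutations_minimal_subneck[OF assms]
      subneck_lub[OF assms]
    by blast
qed

end
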